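(* Let $W(x,y)=w(d(x,y))$ be an ultrametric graphon on $[0,1]$ (setting described in the context), $N_k\ge2$, and let $L_r^k$ have eigenvalues $0=\hat\lambda_1\ge\hat\lambda_2\ge\cdots\ge\hat\lambda_{N_k}$. For every $\gamma\in(0,\tfrac12)$ there is a constant $C=C(\gamma)>0$, independent of $k$, such that for each index $i\ge2$, \[ \left|\frac{|\hat\lambda_i|}{N_k}-\sum_{I_m\in\gamma_r(I_n)}\mu(I_m)\Bigl(w(h(I_m))-w(h(I_{F(m)}))\Bigr)\right|\le N_k^{\gamma-\frac12} \] with probability at least $1-2N_ke^{-CN_k^{2\gamma}}$, where $I_n$ is the interval associated with $\hat\lambda_i$, i.e. the interval such that the $i$-th eigenvalue $\lambda_i$ of $L_d^k$ (in nonincreasing order) equals $\lambda(I_n)$.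
   Context: Nested partitions: fix $M\ge1$ and finite partitions $\Upsilon_1,\dots,\Upsilon_M$ of $[0,1]$ into intervals with $\Upsilon_1=\{[0,1]\}$, each interval of $\Upsilon_\ell$ ($\ell<M$) being a disjoint union of at least two intervals of $\Upsilon_{\ell+1}$. For an interval $I$ of the family, $I_{F(m)}$ (or $F(I)$) is the parent interval and $\gamma_r(I)$ the chain of all intervals of the family containing $I$ (including $I$ and $[0,1]$); by convention $w(h(F([0,1])))=0$. Each interval has height $h(I)>0$ with $h(I)<h(J)$ when $I\subsetneq J$; $d(x,x)=0$, $d(x,y)=h(J)$ for $x\ne y$ with $J$ the smallest interval containing both. Ultrametric graphon: $W(x,y)=w(d(x,y))$, $w:[0,\infty)\to[0,1]$ positive; $\mu$ is Lebesgue measure. Sampling: last-level intervals have rational lengths; $N$ = lcm of denominators, $N_k=kN$; each last-level interval $I$ receives $N_k\mu(I)$ equispaced points; $m$ is the counting measure on the sample ($m(I)=N_k\mu(I)$). $L_d^k=A_d^k-D_d^k$ with $A_d^k=(W(x_i,x_j))$ and $D_d^k$ the row-sum diagonal; $L_r^k=A_r^k-D_r^k$ with $A_r^k=(\xi_{ij})$, $\xi_{ij}$ ($i<j$) independent Bernoulli$(W(x_i,x_j))$, symmetric, zero diagonal. The nonzero eigenvalues of $L_d^k$ are $\lambda(I)=-\sum_{J\in\gamma_r(I)}m(J)(w(h(J))-w(h(F(J))))$, $I$ ranging over the intervals of the family. *)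

theory Defs
  imports "HOL-Probability.Probability" "Jordan_Normal_Form.Char_Poly"
begin

definition nondeg_interval :: "real set \<Rightarrow> bool" where
  "nondeg_interval S \<longleftrightarrow> (\<exists>a b. a < b \<and> {a<..<b} \<subseteq> S \<and> S \<subseteq> {a..b})"

definition family :: "nat \<Rightarrow> (nat \<Rightarrow> real set set) \<Rightarrow> real set set" where
  "family M Ups = (\<Union>l\<in>{1..M}. Ups l)"

definition nested_partitions :: "nat \<Rightarrow> (nat \<Rightarrow> real set set) \<Rightarrow> bool" where
  "nested_partitions M Ups \<longleftrightarrow>
     M \<ge> 1 \<and> Ups 1 = {{0..1}} \<and>
     (\<forall>l\<in>{1..M}. finite (Ups l) \<and> (\<forall>I\<in>Ups l. nondeg_interval I) \<and>
        \<Union>(Ups l) = {0..1} \<and> pairwise disjnt (Ups l)) \<and>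
     (\<forall>l\<in>{1..<M}. \<forall>I\<in>Ups l. \<exists>S. S \<subseteq> Ups (Suc l) \<and> card S \<ge> 2 \<and> \<Union>S = I)"

definition ultrametric_setting ::
  "nat \<Rightarrow> (nat \<Rightarrow> real set set) \<Rightarrow> (real set \<Rightarrow> real) \<Rightarrow> (real \<Rightarrow> real) \<Rightarrow> bool" where
  "ultrametric_setting M Ups h w \<longleftrightarrow>
     nested_partitions M Ups \<and>
     (\<forall>I\<in>family M Ups. h I > 0) \<and>
     (\<forall>I\<in>family M Ups. \<forall>J\<in>family M Ups. I \<subset> J \<longrightarrow> h I < h J) \<and>
     (\<forall>t\<ge>0. 0 < w t \<and> w t \<le> 1) \<and>
     (\<forall>I\<in>Ups M. measure lborel I \<in> \<rat>)"

definition parent :: "nat \<Rightarrow> (nat \<Rightarrow> real set set) \<Rightarrow> real set \<Rightarrow> real set" where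
  "parent M Ups I = (THE J. J \<in> family M Ups \<and> I \<subset> J \<and>
       (\<forall>J'\<in>family M Ups. I \<subset> J' \<longrightarrow> J \<subseteq> J'))"

definition w_parent ::
  "nat \<Rightarrow> (nat \<Rightarrow> real set set) \<Rightarrow> (real set \<Rightarrow> real) \<Rightarrow> (real \<Rightarrow> real) \<Rightarrow> real set \<Rightarrow> real" where
  "w_parent M Ups h w I = (if I = {0..1} then 0 else w (h (parent M Ups I)))"

definition chain_above :: "nat \<Rightarrow> (nat \<Rightarrow> real set set) \<Rightarrow> real set \<Rightarrow> real set set" where
  "chain_above M Ups I = {J \<in> family M Ups. I \<subseteq> J}"

definition udist ::
  "nat \<Rightarrow> (nat \<Rightarrow> real set set) \<Rightarrow> (real set \<Rightarrow> real) \<Rightarrow> real \<Rightarrow> real \<Rightarrow> real" where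
  "udist M Ups h x y = (if x = y then 0 else
     h (THE J. J \<in> family M Ups \<and> x \<in> J \<and> y \<in> J \<and>
          (\<forall>J'\<in>family M Ups. x \<in> J' \<and> y \<in> J' \<longrightarrow> J \<subseteq> J')))"

definition graphon ::
  "nat \<Rightarrow> (nat \<Rightarrow> real set set) \<Rightarrow> (real set \<Rightarrow> real) \<Rightarrow> (real \<Rightarrow> real) \<Rightarrow> real \<Rightarrow> real \<Rightarrow> real" where
  "graphon M Ups h w x y = w (udist M Ups h x y)"

definition base_N :: "nat \<Rightarrow> (nat \<Rightarrow> real set set) \<Rightarrow> nat" where
  "base_N M Ups = Lcm ((\<lambda>I. nat (snd (quotient_of (THE q. of_rat q = measure lborel I)))) ` Ups M)"

definition valid_sample :: "nat \<Rightarrow> (nat \<Rightarrow> real set set) \<Rightarrow> nat \<Rightarrow> (nat \<Rightarrow> real) \<Rightarrow> bool" where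
  "valid_sample M Ups n x \<longleftrightarrow> inj_on x {..<n} \<and> (\<forall>i<n. x i \<in> {0..1}) \<and>
     (\<forall>I\<in>Ups M. real (card {i. i < n \<and> x i \<in> I}) = real n * measure lborel I)"

definition laplacian :: "nat \<Rightarrow> (nat \<Rightarrow> nat \<Rightarrow> real) \<Rightarrow> real Matrix.mat" where
  "laplacian n a = Matrix.mat n n (\<lambda>(i,j). a i j - (if i = j then (\<Sum>l<n. a i l) else 0))"

definition L_det ::
  "nat \<Rightarrow> (nat \<Rightarrow> real set set) \<Rightarrow> (real set \<Rightarrow> real) \<Rightarrow> (real \<Rightarrow> real) \<Rightarrow> nat \<Rightarrow> (nat \<Rightarrow> real) \<Rightarrow> real Matrix.mat" where
  "L_det M Ups h w n x = laplacian n (\<lambda>i j. graphon M Ups h w (x i) (x j))"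

definition edge_pmf ::
  "nat \<Rightarrow> (nat \<Rightarrow> real set set) \<Rightarrow> (real set \<Rightarrow> real) \<Rightarrow> (real \<Rightarrow> real) \<Rightarrow> nat \<Rightarrow> (nat \<Rightarrow> real) \<Rightarrow> (nat \<times> nat \<Rightarrow> bool) pmf" where
  "edge_pmf M Ups h w n x = Pi_pmf {(i,j). i < j \<and> j < n} False
      (\<lambda>(i,j). bernoulli_pmf (graphon M Ups h w (x i) (x j)))"

definition adj_of :: "(nat \<times> nat \<Rightarrow> bool) \<Rightarrow> nat \<Rightarrow> nat \<Rightarrow> real" where
  "adj_of f i j = (if i < j then of_bool (f (i,j)) else if j < i then of_bool (f (j,i)) else 0)"

definition L_rand :: "nat \<Rightarrow> (nat \<times> nat \<Rightarrow> bool) \<Rightarrow> real Matrix.mat" where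
  "L_rand n f = laplacian n (adj_of f)"

text \<open>Eigenvalues (with algebraic multiplicity) of a real square matrix whose characteristic
  polynomial splits over the reals, listed in nonincreasing order.\<close>
definition eigs_desc :: "real Matrix.mat \<Rightarrow> real list" where
  "eigs_desc A = (THE ev. length ev = dim_row A \<and> sorted_wrt (\<ge>) ev \<and>
       char_poly A = (\<Prod>a\<leftarrow>ev. [:- a, 1:]))"

definition lam ::
  "nat \<Rightarrow> (nat \<Rightarrow> real set set) \<Rightarrow> (real set \<Rightarrow> real) \<Rightarrow> (real \<Rightarrow> real) \<Rightarrow> nat \<Rightarrow> real set \<Rightarrow> real" where
  "lam M Ups h w n I = - (\<Sum>J\<in>chain_above M Ups I.
       real n * measure lborel J * (w (h J) - w_parent M Ups h w J))"

end

theory Submission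
  imports Defs
begin

text \<open>The eigenvalues of \<open>L\<^sub>d\<close> are given by hypothesis, so only the deviation of the random
  Laplacian \<open>L\<^sub>r\<close> from \<open>L\<^sub>d\<close> matters. By Weyl's inequality, obtained from the spectral theorem
  and a Courant--Fischer dimension count, every eigenvalue moves by at most \<open>\<rho>\<close> as soon as
  \<open>|v\<^sup>T (L\<^sub>r - L\<^sub>d) v| \<le> \<rho> |v|\<^sup>2\<close> for all \<open>v\<close>. The diagonal of a Laplacian is determined by its
  off-diagonal part, and off the diagonal \<open>L\<^sub>r - L\<^sub>d\<close> consists of independent centred Bernoulli
  variables. Hoeffding's inequality and a union bound control its row sums and its quadratic form on
  a \<open>1/4\<close>-net of \<open>(9 n)^n\<close> points of the unit ball, and the net extends the bound to all \<open>v\<close>.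
  With \<open>\<rho> = n^(1/2 + \<gamma>)\<close> the failure probability is
  \<open>2 n exp (- n^(2 \<gamma>) / 2) + 2 (9 n)^n exp (- n^(1 + 2 \<gamma>) / 16) \<le> 2 n exp (- C n^(2 \<gamma>))\<close>.
  The random Laplacian is negative semidefinite, so \<open>|\<lambda>\<^sub>i| = - \<lambda>\<^sub>i\<close>, and dividing by \<open>n\<close>
  gives the claim.\<close>

section \<open>Spectral theory of real symmetric matrices\<close>

lemma scalar_prod_eq_sum: "w \<in> carrier_vec n \<Longrightarrow> v \<bullet> w = (\<Sum>i<n. v $ i * w $ i)"
  by (simp add: scalar_prod_def atLeast0LessThan)

lemma mult_mat_vec_index_sum:
  "A \<in> carrier_mat n m \<Longrightarrow> v \<in> carrier_vec m \<Longrightarrow> i < n \<Longrightarrow>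
   (A *\<^sub>v v) $ i = (\<Sum>j<m. A $$ (i,j) * v $ j)"
  by (simp add: scalar_prod_def atLeast0LessThan row_def)

lemma mult_mat_index_sum:
  "A \<in> carrier_mat n m \<Longrightarrow> B \<in> carrier_mat m p \<Longrightarrow> i < n \<Longrightarrow> j < p \<Longrightarrow>
   (A * B) $$ (i,j) = (\<Sum>k<m. A $$ (i,k) * B $$ (k,j))"
  by (simp add: scalar_prod_def atLeast0LessThan row_def col_def)

lemma transpose_mat_eq_imp_symmetric:
  "A \<in> carrier_mat n n \<Longrightarrow> transpose_mat A = A \<Longrightarrow> i < n \<Longrightarrow> j < n \<Longrightarrow> A $$ (i,j) = A $$ (j,i)"
  by (metis carrier_matD index_transpose_mat(1))

lemma real_symmetric_complex_eigenvalue_real: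
  fixes A :: "real mat" and v :: "complex vec"
  assumes A: "A \<in> carrier_mat n n" "transpose_mat A = A"
    and v: "v \<in> carrier_vec n" "v \<noteq> 0\<^sub>v n"
    and ev: "map_mat complex_of_real A *\<^sub>v v = z \<cdot>\<^sub>v v"
  shows "Im z = 0"
proof -
  have Av: "(\<Sum>j<n. complex_of_real (A $$ (i,j)) * v $ j) = z * v $ i" if i: "i < n" for i
    using arg_cong[OF ev, of "\<lambda>u. u $ i"] mult_mat_vec_index_sum[of "map_mat complex_of_real A" n n v i] A v i
    by simp
  define N where "N = (\<Sum>i<n. (cmod (v $ i))\<^sup>2)"
  define s where "s = (\<Sum>i<n. cnj (v $ i) * (\<Sum>j<n. complex_of_real (A $$ (i,j)) * v $ j))"
  have "s = (\<Sum>i<n. z * (v $ i * cnj (v $ i)))"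
    unfolding s_def using Av by (intro sum.cong) (auto simp: mult_ac)
  also have "\<dots> = z * complex_of_real N"
    unfolding N_def by (simp only: complex_norm_square sum_distrib_left of_real_sum)
  finally have s_eq: "s = z * complex_of_real N" .
  \<comment> \<open>the Hermitian form of a real symmetric matrix is real\<close>
  have "cnj s = (\<Sum>i<n. \<Sum>j<n. v $ i * complex_of_real (A $$ (i,j)) * cnj (v $ j))"
    unfolding s_def by (simp add: cnj_sum sum_distrib_left mult.assoc)
  also have "\<dots> = (\<Sum>j<n. \<Sum>i<n. v $ i * complex_of_real (A $$ (i,j)) * cnj (v $ j))"
    by (rule sum.swap)
  also have "\<dots> = s"
    unfolding s_def sum_distrib_left
    by (intro sum.cong refl) (simp add: transpose_mat_eq_imp_symmetric[OF A] mult.commute mult.left_commute)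
  finally have "Im s = 0" by (metis Reals_cnj_iff complex_is_Real_iff)
  moreover have "N \<noteq> 0"
  proof
    assume "N = 0"
    then have "\<forall>i\<in>{..<n}. (cmod (v $ i))\<^sup>2 = 0"
      unfolding N_def by (subst sum_nonneg_eq_0_iff[symmetric]) auto
    then have "v = 0\<^sub>v n" using v(1) by (intro eq_vecI) auto
    with v(2) show False ..
  qed
  ultimately show ?thesis using s_eq by simp
qed

lemma real_eigenvector_of_complex_eigenvector:
  fixes A :: "real mat" and v :: "complex vec"
  assumes A: "A \<in> carrier_mat n n" and v: "v \<in> carrier_vec n" "v \<noteq> 0\<^sub>v n"
    and ev: "map_mat complex_of_real A *\<^sub>v v = complex_of_real r \<cdot>\<^sub>v v"
  shows "\<exists>u \<in> carrier_vec n. u \<noteq> 0\<^sub>v n \<and> A *\<^sub>v u = r \<cdot>\<^sub>v u"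
proof -
  have Av: "(\<Sum>j<n. complex_of_real (A $$ (i,j)) * v $ j) = complex_of_real r * v $ i" if i: "i < n" for i
    using arg_cong[OF ev, of "\<lambda>u. u $ i"] mult_mat_vec_index_sum[of "map_mat complex_of_real A" n n v i] A v i
    by simp
  have part: "A *\<^sub>v vec n (\<lambda>i. g (v $ i)) = r \<cdot>\<^sub>v vec n (\<lambda>i. g (v $ i))"
    if g: "g = Re \<or> g = Im" for g
  proof (rule eq_vecI)
    fix i assume "i < dim_vec (r \<cdot>\<^sub>v vec n (\<lambda>i. g (v $ i)))"
    then have i: "i < n" by simp
    have "(\<Sum>j<n. A $$ (i,j) * g (v $ j)) = r * g (v $ i)"
      using arg_cong[OF Av[OF i], of g] g by (auto simp: Re_sum Im_sum)
    then show "(A *\<^sub>v vec n (\<lambda>i. g (v $ i))) $ i = (r \<cdot>\<^sub>v vec n (\<lambda>i. g (v $ i))) $ i"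
      using i by (subst mult_mat_vec_index_sum[OF A _ i]) auto
  qed (use A in simp)
  have "vec n (\<lambda>i. Re (v $ i)) \<noteq> 0\<^sub>v n \<or> vec n (\<lambda>i. Im (v $ i)) \<noteq> 0\<^sub>v n"
  proof (rule ccontr)
    assume "\<not> ?thesis"
    then have "Re (v $ i) = 0 \<and> Im (v $ i) = 0" if "i < n" for i
      using that by (metis index_vec index_zero_vec(1))
    then have "v = 0\<^sub>v n" using v(1) by (intro eq_vecI) (auto simp: complex_eq_iff)
    with v(2) show False ..
  qed
  then show ?thesis using part by fastforce
qed

lemma real_symmetric_unit_eigenvector:
  fixes A :: "real mat"
  assumes A: "A \<in> carrier_mat n n" "transpose_mat A = A" and n: "0 < n"
  shows "\<exists>v \<mu>. v \<in> carrier_vec n \<and> v \<bullet> v = 1 \<and> A *\<^sub>v v = \<mu> \<cdot>\<^sub>v v"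
proof -
  define Ac where "Ac = map_mat complex_of_real A"
  have Ac: "Ac \<in> carrier_mat n n" using A unfolding Ac_def by auto
  have "\<not> constant (poly (char_poly Ac))"
    using degree_monic_char_poly[OF Ac] n by (simp add: constant_degree)
  then obtain z where "poly (char_poly Ac) z = 0" using fundamental_theorem_of_algebra by blast
  then have "eigenvalue Ac z" using eigenvalue_root_char_poly[OF Ac] by simp
  then obtain v where v: "v \<in> carrier_vec n" "v \<noteq> 0\<^sub>v n" "Ac *\<^sub>v v = z \<cdot>\<^sub>v v"
    unfolding eigenvalue_def eigenvector_def using Ac by auto
  have "z = complex_of_real (Re z)"
    using real_symmetric_complex_eigenvalue_real[OF A v[unfolded Ac_def]] by (simp add: complex_eq_iff)
  then obtain u where u: "u \<in> carrier_vec n" "u \<noteq> 0\<^sub>v n" "A *\<^sub>v u = Re z \<cdot>\<^sub>v u"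
    using real_eigenvector_of_complex_eigenvector[OF A(1) v(1,2), of "Re z"] v(3) unfolding Ac_def by auto
  have upos: "u \<bullet> u > 0" using conjugate_square_greater_0_vec[OF u(1)] u(2) by simp
  define v' where "v' = (1 / sqrt (u \<bullet> u)) \<cdot>\<^sub>v u"
  have "v' \<bullet> v' = 1" unfolding v'_def using upos u(1)
    by (simp add: smult_scalar_prod_distrib scalar_prod_smult_distrib[of _ n] power2_eq_square[symmetric])
  moreover have "A *\<^sub>v v' = Re z \<cdot>\<^sub>v v'" unfolding v'_def using u A
    by (simp add: mult_mat_vec smult_smult_assoc mult.commute)
  moreover have "v' \<in> carrier_vec n" using u(1) unfolding v'_def by simp
  ultimately show ?thesis by blast
qed

definition householder :: "nat \<Rightarrow> real vec \<Rightarrow> real mat" where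
  "householder n w = mat n n (\<lambda>(i,j). of_bool (i = j) - 2 / (w \<bullet> w) * w $ i * w $ j)"

lemma householder_carrier[simp]: "householder n w \<in> carrier_mat n n"
  by (simp add: householder_def)

lemma transpose_householder[simp]: "transpose_mat (householder n w) = householder n w"
  by (rule eq_matI) (auto simp: householder_def)

lemma householder_involution:
  fixes w :: "real vec"
  assumes w: "w \<in> carrier_vec n" "w \<noteq> 0\<^sub>v n"
  shows "householder n w * householder n w = 1\<^sub>m n"
proof (rule eq_matI)
  fix i j assume "i < dim_row (1\<^sub>m n)" "j < dim_col (1\<^sub>m n)"
  then have i: "i < n" and j: "j < n" by auto
  define c where "c = 2 / (w \<bullet> w)"
  have "w \<bullet> w > 0" using conjugate_square_greater_0_vec[OF w(1)] w(2) by simp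
  then have cw: "c * (\<Sum>k<n. w $ k * w $ k) = 2"
    unfolding c_def scalar_prod_eq_sum[OF w(1), symmetric] by simp
  have "(householder n w * householder n w) $$ (i,j)
      = (\<Sum>k<n. (of_bool (i = k) - c * w $ i * w $ k) * (of_bool (k = j) - c * w $ k * w $ j))"
    using i j by (subst mult_mat_index_sum[OF householder_carrier householder_carrier i j])
      (simp add: householder_def c_def)
  also have "\<dots> = (\<Sum>k<n. of_bool (i = k) * of_bool (k = j)) - (\<Sum>k<n. of_bool (i = k) * (c * w $ k * w $ j))
      - (\<Sum>k<n. of_bool (k = j) * (c * w $ i * w $ k)) + (c * w $ i * w $ j) * (c * (\<Sum>k<n. w $ k * w $ k))"
    by (simp add: algebra_simps sum.distrib sum_subtractf sum_distrib_left)
  also have "\<dots> = of_bool (i = j) - 2 * c * w $ i * w $ j + (c * w $ i * w $ j) * (c * (\<Sum>k<n. w $ k * w $ k))"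
    using i j by simp
  also have "\<dots> = 1\<^sub>m n $$ (i,j)" using i j by (simp add: cw)
  finally show "(householder n w * householder n w) $$ (i,j) = 1\<^sub>m n $$ (i,j)" .
qed (auto simp: householder_def)

lemma householder_swap:
  fixes u v :: "real vec"
  assumes u: "u \<in> carrier_vec n" and v: "v \<in> carrier_vec n"
    and norm: "u \<bullet> u = v \<bullet> v" and uv: "u \<noteq> v"
  shows "householder n (v - u) *\<^sub>v v = u"
proof (rule eq_vecI)
  define w where "w = v - u"
  have w: "w \<in> carrier_vec n" using u v unfolding w_def by simp
  have "w \<noteq> 0\<^sub>v n"
  proof
    assume w0: "w = 0\<^sub>v n"
    have "v $ i = u $ i" if "i < n" for i
      using arg_cong[OF w0, of "\<lambda>x. x $ i"] that u v unfolding w_def by simp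
    then have "v = u" using u v by (intro eq_vecI) auto
    with uv show False by simp
  qed
  then have pos: "w \<bullet> w > 0" using conjugate_square_greater_0_vec[OF w] by simp
  \<comment> \<open>equal norms give \<open>w \<bullet> w = 2 (w \<bullet> v)\<close>\<close>
  have "w \<bullet> w = 2 * (w \<bullet> v)"
    using norm u v unfolding w_def
    by (simp add: minus_scalar_prod_distrib[OF v u] scalar_prod_minus_distrib[OF v v u]
      scalar_prod_minus_distrib[OF u v u] comm_scalar_prod[OF u v])
  then have cwv: "2 / (w \<bullet> w) * (\<Sum>k<n. w $ k * v $ k) = 1"
    using pos by (simp add: scalar_prod_eq_sum[OF v, symmetric])
  fix i assume "i < dim_vec u"
  then have i: "i < n" using u by simp
  have "(householder n w *\<^sub>v v) $ i = (\<Sum>k<n. (of_bool (i = k) - 2 / (w \<bullet> w) * w $ i * w $ k) * v $ k)"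
    using i by (subst mult_mat_vec_index_sum[OF householder_carrier v i]) (simp add: householder_def)
  also have "\<dots> = v $ i - w $ i * (2 / (w \<bullet> w) * (\<Sum>k<n. w $ k * v $ k))"
    using i by (simp add: algebra_simps sum_subtractf sum_distrib_left)
  also have "\<dots> = v $ i - w $ i" by (simp only: cwv mult_1_right)
  also have "\<dots> = u $ i" using i u v by (simp add: w_def)
  finally show "(householder n (v - u) *\<^sub>v v) $ i = u $ i" unfolding w_def .
qed (use u in \<open>simp add: householder_def\<close>)

lemma reflection_to_first_unit_vec:
  fixes v :: "real vec"
  assumes v: "v \<in> carrier_vec n" "v \<bullet> v = 1" and n: "0 < n"
  shows "\<exists>H. H \<in> carrier_mat n n \<and> transpose_mat H = H \<and> H * H = 1\<^sub>m n \<and> H *\<^sub>v v = unit_vec n 0"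
proof (cases "v = unit_vec n 0")
  case True
  then show ?thesis by (intro exI[of _ "1\<^sub>m n"]) auto
next
  case False
  have e: "unit_vec n 0 \<bullet> unit_vec n 0 = (1::real)" using n by simp
  have "v - unit_vec n 0 \<noteq> 0\<^sub>v n"
  proof
    assume v0: "v - unit_vec n 0 = 0\<^sub>v n"
    have "v $ i = unit_vec n 0 $ i" if "i < n" for i
      using arg_cong[OF v0, of "\<lambda>x. x $ i"] that v(1) by simp
    then have "v = unit_vec n 0" using v(1) by (intro eq_vecI) auto
    with False show False ..
  qed
  moreover have "householder n (v - unit_vec n 0) *\<^sub>v v = unit_vec n 0"
    using householder_swap[OF unit_vec_carrier v(1) _ False[symmetric]] e v(2) by simp
  ultimately show ?thesis
    using householder_involution[of "v - unit_vec n 0" n] v(1)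
    by (intro exI[of _ "householder n (v - unit_vec n 0)"]) simp
qed

lemma reflected_eigenvector_to_first:
  fixes A H :: "real mat"
  assumes A: "A \<in> carrier_mat n n" "transpose_mat A = A"
    and H: "H \<in> carrier_mat n n" "transpose_mat H = H" "H * H = 1\<^sub>m n"
    and v: "v \<in> carrier_vec n" "A *\<^sub>v v = \<mu> \<cdot>\<^sub>v v" and Hv: "H *\<^sub>v v = unit_vec n 0"
  shows "transpose_mat (H * A * H) = H * A * H"
    and "(H * A * H) *\<^sub>v unit_vec n 0 = \<mu> \<cdot>\<^sub>v unit_vec n 0"
proof -
  have assoc: "H * A * H = H * (A * H)" using H(1) A(1) by simp
  have "transpose_mat (H * A * H) = transpose_mat (A * H) * transpose_mat H"
    unfolding assoc by (rule transpose_mult) (use H A in auto)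
  also have "transpose_mat (A * H) = H * A" using transpose_mult[OF A(1) H(1)] H(2) A(2) by simp
  finally show "transpose_mat (H * A * H) = H * A * H" unfolding assoc using H(1,2) A(1) by simp
  have "H *\<^sub>v unit_vec n 0 = (H * H) *\<^sub>v v"
    using assoc_mult_mat_vec[OF H(1) H(1) v(1)] Hv by simp
  then have He: "H *\<^sub>v unit_vec n 0 = v" using H(3) v(1) by simp
  have "(H * A * H) *\<^sub>v unit_vec n 0 = H *\<^sub>v (A *\<^sub>v (H *\<^sub>v unit_vec n 0))"
    unfolding assoc using H(1) A(1) by (simp add: assoc_mult_mat_vec[of _ n n _ n])
  also have "\<dots> = \<mu> \<cdot>\<^sub>v unit_vec n 0"
    unfolding He v(2) using H(1) Hv v(1) by (simp add: mult_mat_vec)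
  finally show "(H * A * H) *\<^sub>v unit_vec n 0 = \<mu> \<cdot>\<^sub>v unit_vec n 0" .
qed

lemma mult_mat_vec_unit_vec:
  fixes A :: "real mat"
  assumes A: "A \<in> carrier_mat n n" and i: "i < n" and j: "j < n"
  shows "(A *\<^sub>v unit_vec n j) $ i = A $$ (i,j)"
  using A i j by (subst mult_mat_vec_index_sum[OF A _ i]) (simp_all add: unit_vec_def of_bool_def[symmetric])

lemma symmetric_block_of_first_eigenvector:
  fixes b :: "real mat"
  assumes b: "b \<in> carrier_mat (Suc m) (Suc m)" "transpose_mat b = b"
    and ev: "b *\<^sub>v unit_vec (Suc m) 0 = \<mu> \<cdot>\<^sub>v unit_vec (Suc m) 0"
  shows "b = four_block_mat (mat 1 1 (\<lambda>_. \<mu>)) (0\<^sub>m 1 m) (0\<^sub>m m 1) (mat m m (\<lambda>(i,j). b $$ (Suc i, Suc j)))"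
proof -
  have col0: "b $$ (i,0) = (if i = 0 then \<mu> else 0)" if "i < Suc m" for i
    using arg_cong[OF ev, of "\<lambda>v. v $ i"] mult_mat_vec_unit_vec[OF b(1) that, of 0] that by simp
  have row0: "b $$ (0,j) = (if j = 0 then \<mu> else 0)" if "j < Suc m" for j
    using col0[OF that] transpose_mat_eq_imp_symmetric[OF b, of 0 j] that by simp
  show ?thesis
    by (rule eq_matI) (use b col0 row0 in auto)
qed

lemma orthogonal_block_diagonalization:
  fixes U :: "real mat"
  assumes U: "U \<in> carrier_mat m m" "transpose_mat U * U = 1\<^sub>m m"
  defines "V \<equiv> four_block_mat (1\<^sub>m 1) (0\<^sub>m 1 m) (0\<^sub>m m 1) U"
  shows "V \<in> carrier_mat (Suc m) (Suc m)" and "transpose_mat V * V = 1\<^sub>m (Suc m)"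
    and "four_block_mat (mat 1 1 (\<lambda>_. \<mu>)) (0\<^sub>m 1 m) (0\<^sub>m m 1) (U * mat_diag m l * transpose_mat U)
         = V * mat_diag (Suc m) (\<lambda>i. if i = 0 then \<mu> else l (i - 1)) * transpose_mat V"
proof -
  define M1 :: "real mat" where "M1 = mat 1 1 (\<lambda>_. \<mu>)"
  have dims: "dim_row (mat_diag m l) = m" "dim_col (mat_diag m l) = m"
    by (simp_all add: mat_diag_def)
  show V: "V \<in> carrier_mat (Suc m) (Suc m)" unfolding V_def using U by auto
  have tV: "transpose_mat V = four_block_mat (1\<^sub>m 1) (0\<^sub>m 1 m) (0\<^sub>m m 1) (transpose_mat U)"
    unfolding V_def using U by (subst transpose_four_block_mat) auto
  show "transpose_mat V * V = 1\<^sub>m (Suc m)"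
    unfolding tV unfolding V_def using U by (subst mult_four_block_mat[of _ 1 1 _ m _ m]) auto
  have D: "mat_diag (Suc m) (\<lambda>i. if i = 0 then \<mu> else l (i - 1))
      = four_block_mat M1 (0\<^sub>m 1 m) (0\<^sub>m m 1) (mat_diag m l)"
    by (rule eq_matI) (auto simp: mat_diag_def M1_def)
  have VD: "V * mat_diag (Suc m) (\<lambda>i. if i = 0 then \<mu> else l (i - 1))
      = four_block_mat M1 (0\<^sub>m 1 m) (0\<^sub>m m 1) (U * mat_diag m l)"
    unfolding D V_def using U
    by (subst mult_four_block_mat[of _ 1 1 _ m _ m]) (auto simp: M1_def dims intro!: cong_four_block_mat eq_matI)
  show "four_block_mat (mat 1 1 (\<lambda>_. \<mu>)) (0\<^sub>m 1 m) (0\<^sub>m m 1) (U * mat_diag m l * transpose_mat U)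
      = V * mat_diag (Suc m) (\<lambda>i. if i = 0 then \<mu> else l (i - 1)) * transpose_mat V"
    unfolding VD tV using U
    by (subst mult_four_block_mat[of _ 1 1 _ m _ m]) (auto simp: M1_def dims intro!: cong_four_block_mat eq_matI)
qed

lemma reflection_conjugate_diagonalization:
  fixes A H V :: "real mat"
  assumes H: "H \<in> carrier_mat n n" "transpose_mat H = H" "H * H = 1\<^sub>m n"
    and A: "A \<in> carrier_mat n n"
    and V: "V \<in> carrier_mat n n" "transpose_mat V * V = 1\<^sub>m n"
    and diag: "H * A * H = V * mat_diag n l * transpose_mat V"
  shows "transpose_mat (H * V) * (H * V) = 1\<^sub>m n"
    and "A = (H * V) * mat_diag n l * transpose_mat (H * V)"
proof -
  have tV: "transpose_mat V \<in> carrier_mat n n" using V by simp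
  have tHV: "transpose_mat (H * V) = transpose_mat V * H"
    using H V by (simp add: transpose_mult[of _ n n])
  have "transpose_mat (H * V) * (H * V) = transpose_mat V * (H * (H * V))"
    unfolding tHV using assoc_mult_mat[OF tV H(1) mult_carrier_mat[OF H(1) V(1)]] .
  also have "H * (H * V) = (H * H) * V" by (rule assoc_mult_mat[OF H(1) H(1) V(1), symmetric])
  also have "\<dots> = V" using H(3) V(1) by simp
  finally show "transpose_mat (H * V) * (H * V) = 1\<^sub>m n" using V(2) by simp
  have "A = (H * H) * A * (H * H)"
    by (simp only: H(3) left_mult_one_mat[OF A] right_mult_one_mat[OF A])
  also have "\<dots> = H * (H * A * H) * H"
    using H(1) A by (simp add: assoc_mult_mat[of _ n n _ n _ n])
  also have "\<dots> = (H * V) * mat_diag n l * transpose_mat (H * V)"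
    unfolding diag tHV using H(1) V(1) tV mult_carrier_mat[OF V(1) mat_diag_dim[of n l]]
      mult_carrier_mat[OF mat_diag_dim[of n l] tV] mult_carrier_mat[OF V(1) mult_carrier_mat[OF mat_diag_dim[of n l] tV]]
    by (simp add: assoc_mult_mat[of _ n n _ n _ n])
  finally show "A = (H * V) * mat_diag n l * transpose_mat (H * V)" .
qed

theorem real_symmetric_orthogonal_diagonalization:
  fixes A :: "real mat"
  assumes "A \<in> carrier_mat n n" "transpose_mat A = A"
  shows "\<exists>U l. U \<in> carrier_mat n n \<and> transpose_mat U * U = 1\<^sub>m n \<and> A = U * mat_diag n l * transpose_mat U"
  using assms
proof (induction n arbitrary: A)
  case 0
  then show ?case by (intro exI[of _ "1\<^sub>m 0"] exI[of _ "\<lambda>_. 0"]) (auto intro!: eq_matI)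
next
  case (Suc m)
  note A = Suc.prems
  obtain v :: "real vec" and \<mu> where v: "v \<in> carrier_vec (Suc m)" "v \<bullet> v = 1" "A *\<^sub>v v = \<mu> \<cdot>\<^sub>v v"
    using real_symmetric_unit_eigenvector[OF A] by auto
  obtain H where H: "H \<in> carrier_mat (Suc m) (Suc m)" "transpose_mat H = H" "H * H = 1\<^sub>m (Suc m)"
    "H *\<^sub>v v = unit_vec (Suc m) 0"
    using reflection_to_first_unit_vec[OF v(1,2)] by auto
  define b where "b = H * A * H"
  have b: "b \<in> carrier_mat (Suc m) (Suc m)" unfolding b_def using H(1) A(1) by simp
  note tb = reflected_eigenvector_to_first(1)[OF A H(1-3) v(1,3) H(4), folded b_def]
  note be = reflected_eigenvector_to_first(2)[OF A H(1-3) v(1,3) H(4), folded b_def]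
  define b' where "b' = mat m m (\<lambda>(i,j). b $$ (Suc i, Suc j))"
  have b': "b' \<in> carrier_mat m m" "transpose_mat b' = b'"
    unfolding b'_def using transpose_mat_eq_imp_symmetric[OF b tb] by (auto intro!: eq_matI)
  obtain U l where U: "U \<in> carrier_mat m m" "transpose_mat U * U = 1\<^sub>m m"
    "b' = U * mat_diag m l * transpose_mat U"
    using Suc.IH[OF b'] by auto
  define V where "V = four_block_mat (1\<^sub>m 1) (0\<^sub>m 1 m) (0\<^sub>m m 1) U"
  have V: "V \<in> carrier_mat (Suc m) (Suc m)" "transpose_mat V * V = 1\<^sub>m (Suc m)"
    using orthogonal_block_diagonalization(1,2)[OF U(1,2)] unfolding V_def by auto
  define l' where "l' = (\<lambda>i. if i = 0 then \<mu> else l (i - 1))"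
  have "H * A * H = V * mat_diag (Suc m) l' * transpose_mat V"
    using symmetric_block_of_first_eigenvector[OF b tb be] orthogonal_block_diagonalization(3)[OF U(1,2)]
    unfolding b_def[symmetric] b'_def[symmetric] U(3) V_def l'_def by simp
  note HV = reflection_conjugate_diagonalization[OF H(1-3) A(1) V this]
  show ?case by (intro exI[of _ "H * V"] exI[of _ l'] conjI mult_carrier_mat[OF H(1) V(1)] HV)
qed

lemma prod_linear_factors_eq_iff_mset_eq:
  fixes xs ys :: "'a :: idom list"
  shows "(\<Prod>a\<leftarrow>xs. [:- a, 1:]) = (\<Prod>a\<leftarrow>ys. [:- a, 1:]) \<longleftrightarrow> mset xs = mset ys"
proof
  show "mset xs = mset ys \<Longrightarrow> (\<Prod>a\<leftarrow>xs. [:- a, 1:]) = (\<Prod>a\<leftarrow>ys. [:- a, 1:])"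
    by (metis mset_map prod_mset_prod_list)
next
  show "(\<Prod>a\<leftarrow>xs. [:- a, 1:]) = (\<Prod>a\<leftarrow>ys. [:- a, 1:]) \<Longrightarrow> mset xs = mset ys"
  proof (induction xs arbitrary: ys)
    case Nil
    show ?case
    proof (cases ys)
      case (Cons b ys')
      have "poly (\<Prod>a\<leftarrow>ys. [:- a, 1:]) b = 0" unfolding Cons by (simp add: poly_prod_list)
      with Nil.prems show ?thesis by simp
    qed simp
  next
    case (Cons a xs)
    have "poly (\<Prod>b\<leftarrow>ys. [:- b, 1:]) a = 0" using Cons.prems[symmetric] by (simp add: poly_prod_list)
    then have "a \<in> set ys" by (auto simp: poly_prod_list prod_list_zero_iff)
    then have m: "mset ys = mset (a # remove1 a ys)" by simp
    then have "(\<Prod>b\<leftarrow>ys. [:- b, 1:]) = [:- a, 1:] * (\<Prod>b\<leftarrow>remove1 a ys. [:- b, 1:])"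
      by (metis (no_types, lifting) list.simps(9) mset_map prod_list.Cons prod_mset_prod_list)
    then have "[:- a, 1:] * (\<Prod>b\<leftarrow>xs. [:- b, 1:]) = [:- a, 1:] * (\<Prod>b\<leftarrow>remove1 a ys. [:- b, 1:])"
      using Cons.prems by (simp only: list.map prod_list.Cons)
    then have "(\<Prod>b\<leftarrow>xs. [:- b, 1:]) = (\<Prod>b\<leftarrow>remove1 a ys. [:- b, 1:])"
      by (subst (asm) mult_left_cancel) auto
    with Cons.IH m show ?case by simp
  qed
qed

lemma eigs_desc_eqI:
  assumes A: "A \<in> carrier_mat n n" and cp: "char_poly A = (\<Prod>a\<leftarrow>xs. [:- a, 1:])" and len: "length xs = n"
  shows "eigs_desc A = rev (sort xs)"
  unfolding eigs_desc_def
proof (rule the_equality)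
  show "length (rev (sort xs)) = dim_row A \<and> sorted_wrt (\<ge>) (rev (sort xs)) \<and>
        char_poly A = (\<Prod>a\<leftarrow>rev (sort xs). [:- a, 1:])"
    using A len cp by (auto simp: sorted_wrt_rev prod_linear_factors_eq_iff_mset_eq)
next
  fix ev assume ev: "length ev = dim_row A \<and> sorted_wrt (\<ge>) ev \<and> char_poly A = (\<Prod>a\<leftarrow>ev. [:- a, 1:])"
  then have "mset ev = mset xs" using cp prod_linear_factors_eq_iff_mset_eq[of ev xs] by simp
  moreover have "sorted (rev ev)" using ev by (simp add: sorted_wrt_rev)
  ultimately have "sort xs = rev ev" by (intro properties_for_sort) auto
  then show "ev = rev (sort xs)" by simp
qed

lemma eigs_desc_diagonalization:
  fixes A U :: "real mat"
  assumes U: "U \<in> carrier_mat n n" "transpose_mat U * U = 1\<^sub>m n"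
    and A: "A = U * mat_diag n l * transpose_mat U"
  shows "eigs_desc A = rev (sort (map l [0..<n]))"
proof -
  have tU: "transpose_mat U \<in> carrier_mat n n" using U by simp
  have "U * transpose_mat U = 1\<^sub>m n" using mat_mult_left_right_inverse[OF tU U(1) U(2)] .
  then have "similar_mat_wit A (mat_diag n l) U (transpose_mat U)"
    unfolding similar_mat_wit_def using U tU A by (auto simp: Let_def)
  then have "char_poly A = char_poly (mat_diag n l)"
    by (intro char_poly_similar) (auto simp: similar_mat_def)
  also have "\<dots> = (\<Prod>a\<leftarrow>diag_mat (mat_diag n l). [:- a, 1:])"
    by (rule char_poly_upper_triangular[of _ n]) (auto simp: upper_triangular_def mat_diag_def)
  also have "diag_mat (mat_diag n l) = map l [0..<n]"
    by (simp add: diag_mat_def mat_diag_def)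
  finally have "char_poly A = (\<Prod>a\<leftarrow>map l [0..<n]. [:- a, 1:])" .
  then show ?thesis by (rule eigs_desc_eqI[rotated]) (use A U tU in auto)
qed

lemma homogeneous_system_eliminate_pivot:
  fixes a :: "'t \<Rightarrow> 's \<Rightarrow> real"
  assumes S: "finite S" "p \<in> S" and pivot: "a t p \<noteq> 0"
    and c': "\<And>t'. t' \<in> T \<Longrightarrow> (\<Sum>s\<in>S - {p}. (a t' s - a t' p / a t p * a t s) * c' s) = 0"
  defines "c \<equiv> c'(p := - (\<Sum>s\<in>S - {p}. a t s * c' s) / a t p)"
  shows "\<And>t'. t' \<in> insert t T \<Longrightarrow> (\<Sum>s\<in>S. a t' s * c s) = 0"
proof -
  fix t' assume t': "t' \<in> insert t T"
  have "(\<Sum>s\<in>S. a t' s * c s) = a t' p * c p + (\<Sum>s\<in>S - {p}. a t' s * c' s)"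
    using S unfolding c_def by (simp add: sum.remove)
  also have "\<dots> = (\<Sum>s\<in>S - {p}. a t' s * c' s) - a t' p / a t p * (\<Sum>s\<in>S - {p}. a t s * c' s)"
    unfolding c_def by simp
  also have "\<dots> = (\<Sum>s\<in>S - {p}. (a t' s - a t' p / a t p * a t s) * c' s)"
    by (simp add: left_diff_distrib sum_subtractf sum_distrib_left mult.assoc)
  also have "\<dots> = 0"
    using t' c' pivot by (cases "t' = t") (simp_all add: sum_subtractf)
  finally show "(\<Sum>s\<in>S. a t' s * c s) = 0" .
qed

lemma homogeneous_system_nontrivial_solution:
  fixes a :: "'t \<Rightarrow> 's \<Rightarrow> real"
  assumes "finite T" "finite S" "card T < card S"
  shows "\<exists>c. (\<exists>s\<in>S. c s \<noteq> 0) \<and> (\<forall>t\<in>T. (\<Sum>s\<in>S. a t s * c s) = 0)"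
  using assms
proof (induction T arbitrary: S a rule: finite_induct)
  case empty
  then obtain s0 where "s0 \<in> S" by (metis card.empty card_gt_0_iff ex_in_conv)
  then show ?case by (intro exI[of _ "\<lambda>s. if s = s0 then 1 else 0"]) auto
next
  case (insert t T)
  show ?case
  proof (cases "\<forall>s\<in>S. a t s = 0")
    case True
    have "card T < card S" using insert by simp
    then obtain c where "\<exists>s\<in>S. c s \<noteq> 0" "\<forall>t\<in>T. (\<Sum>s\<in>S. a t s * c s) = 0"
      using insert.IH[OF insert.prems(1)] by blast
    then show ?thesis using True by (intro exI[of _ c]) auto
  next
    case False
    then obtain p where p: "p \<in> S" "a t p \<noteq> 0" by blast
    have "card T < card (S - {p})" using insert p by (simp add: card_Diff_singleton)
    then obtain c' where c': "\<exists>s\<in>S - {p}. c' s \<noteq> 0"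
      "\<forall>t'\<in>T. (\<Sum>s\<in>S - {p}. (a t' s - a t' p / a t p * a t s) * c' s) = 0"
      using insert.IH[of "S - {p}" "\<lambda>t' s. a t' s - a t' p / a t p * a t s"] insert.prems by auto
    define c where "c = c'(p := - (\<Sum>s\<in>S - {p}. a t s * c' s) / a t p)"
    have "\<exists>s\<in>S. c s \<noteq> 0" using c'(1) unfolding c_def by auto
    moreover have "\<forall>t'\<in>insert t T. (\<Sum>s\<in>S. a t' s * c s) = 0"
      using homogeneous_system_eliminate_pivot[where a = a and t = t and T = T and c' = c', OF insert.prems(1) p]
        c'(2) unfolding c_def by blast
    ultimately show ?thesis by blast
  qed
qed

lemma mat_diag_mult_vec:
  fixes c :: "real vec"
  assumes c: "c \<in> carrier_vec n"
  shows "mat_diag n l *\<^sub>v c = vec n (\<lambda>k. l k * c $ k)"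
proof (rule eq_vecI)
  fix i assume "i < dim_vec (vec n (\<lambda>k. l k * c $ k))"
  then have i: "i < n" by simp
  then show "(mat_diag n l *\<^sub>v c) $ i = vec n (\<lambda>k. l k * c $ k) $ i"
    using c by (subst mult_mat_vec_index_sum[OF mat_diag_dim c i])
      (simp add: mat_diag_def if_distrib[where f = "\<lambda>x. x * _"] cong: if_cong)
qed (simp add: mat_diag_def)

lemma quadratic_form_diagonalization:
  fixes A U :: "real mat"
  assumes U: "U \<in> carrier_mat n n" "U * transpose_mat U = 1\<^sub>m n"
    and A: "A = U * mat_diag n l * transpose_mat U" and v: "v \<in> carrier_vec n"
  shows "v \<bullet> (A *\<^sub>v v) = (\<Sum>k<n. l k * ((transpose_mat U *\<^sub>v v) $ k)\<^sup>2)"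
    and "v \<bullet> v = (\<Sum>k<n. ((transpose_mat U *\<^sub>v v) $ k)\<^sup>2)"
proof -
  define c where "c = transpose_mat U *\<^sub>v v"
  have tU: "transpose_mat U \<in> carrier_mat n n" using U by simp
  have c: "c \<in> carrier_vec n" unfolding c_def using tU v by simp
  have dc: "mat_diag n l *\<^sub>v c \<in> carrier_vec n" using mult_mat_vec_carrier[OF mat_diag_dim c] .
  have "A *\<^sub>v v = U *\<^sub>v (mat_diag n l *\<^sub>v c)"
    unfolding A c_def using U tU v by (simp add: assoc_mult_mat_vec[of _ n n _ n])
  then have "v \<bullet> (A *\<^sub>v v) = c \<bullet> (mat_diag n l *\<^sub>v c)"
    using transpose_vec_mult_scalar[OF U(1) dc v] unfolding c_def by simp
  also have "\<dots> = (\<Sum>k<n. c $ k * (l k * c $ k))"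
    using c by (simp add: mat_diag_mult_vec scalar_prod_eq_sum[of _ n])
  finally show "v \<bullet> (A *\<^sub>v v) = (\<Sum>k<n. l k * ((transpose_mat U *\<^sub>v v) $ k)\<^sup>2)"
    unfolding c_def by (simp add: power2_eq_square mult_ac)
  have "U *\<^sub>v c = (U * transpose_mat U) *\<^sub>v v"
    unfolding c_def using U(1) tU v by simp
  then have "v = U *\<^sub>v c" using U(2) v by simp
  then have "v \<bullet> v = c \<bullet> c"
    using transpose_vec_mult_scalar[OF U(1) c v] unfolding c_def by simp
  then show "v \<bullet> v = (\<Sum>k<n. ((transpose_mat U *\<^sub>v v) $ k)\<^sup>2)"
    using c unfolding c_def by (simp add: scalar_prod_eq_sum[of _ n] power2_eq_square)
qed

lemma quadratic_form_ge_on_eigenvalues_above: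
  fixes A U :: "real mat"
  assumes U: "U \<in> carrier_mat n n" "U * transpose_mat U = 1\<^sub>m n"
    and A: "A = U * mat_diag n l * transpose_mat U" and v: "v \<in> carrier_vec n"
    and above: "\<And>k. k < n \<Longrightarrow> (transpose_mat U *\<^sub>v v) $ k \<noteq> 0 \<Longrightarrow> c \<le> l k"
  shows "c * (v \<bullet> v) \<le> v \<bullet> (A *\<^sub>v v)"
  unfolding quadratic_form_diagonalization[OF U A v] sum_distrib_left
  by (intro sum_mono) (use above in \<open>fastforce intro: mult_right_mono\<close>)

lemma quadratic_form_le_on_eigenvalues_below:
  fixes A U :: "real mat"
  assumes U: "U \<in> carrier_mat n n" "U * transpose_mat U = 1\<^sub>m n"
    and A: "A = U * mat_diag n l * transpose_mat U" and v: "v \<in> carrier_vec n"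
    and below: "\<And>k. k < n \<Longrightarrow> (transpose_mat U *\<^sub>v v) $ k \<noteq> 0 \<Longrightarrow> l k \<le> c"
  shows "v \<bullet> (A *\<^sub>v v) \<le> c * (v \<bullet> v)"
  unfolding quadratic_form_diagonalization[OF U A v] sum_distrib_left
  by (intro sum_mono) (use below in \<open>fastforce intro: mult_right_mono\<close>)

lemma card_ge_nth_sort_desc:
  fixes xs :: "real list"
  assumes p: "p < length xs"
  shows "Suc p \<le> card {k. k < length xs \<and> rev (sort xs) ! p \<le> xs ! k}"
proof -
  define ys where "ys = rev (sort xs)"
  have m: "mset ys = mset xs" unfolding ys_def by simp
  have ly: "length ys = length xs" unfolding ys_def by simp
  have sy: "sorted_wrt (\<ge>) ys" unfolding ys_def by (simp add: sorted_wrt_rev)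
  have "card {k. k < length xs \<and> ys ! p \<le> xs ! k} = length (filter (\<lambda>x. ys ! p \<le> x) xs)"
    by (simp add: length_filter_conv_card)
  also have "\<dots> = length (filter (\<lambda>x. ys ! p \<le> x) ys)"
    by (metis m mset_filter size_mset)
  also have "\<dots> = card {k. k < length ys \<and> ys ! p \<le> ys ! k}"
    by (simp add: length_filter_conv_card)
  also have "card {k. k < length ys \<and> ys ! p \<le> ys ! k} \<ge> card {..p}"
  proof (rule card_mono)
    show "{..p} \<subseteq> {k. k < length ys \<and> ys ! p \<le> ys ! k}"
    proof
      fix k assume "k \<in> {..p}"
      then have k: "k \<le> p" by simp
      then have "ys ! p \<le> ys ! k" using sy p ly
        by (cases "k = p") (auto simp: sorted_wrt_iff_nth_less)
      then show "k \<in> {k. k < length ys \<and> ys ! p \<le> ys ! k}" using k p ly by simp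
    qed
  qed simp
  finally show ?thesis unfolding ys_def by simp
qed

lemma card_gt_nth_sort_desc:
  fixes xs :: "real list"
  assumes p: "p < length xs"
  shows "card {k. k < length xs \<and> rev (sort xs) ! p < xs ! k} \<le> p"
proof -
  define ys where "ys = rev (sort xs)"
  have m: "mset ys = mset xs" unfolding ys_def by simp
  have ly: "length ys = length xs" unfolding ys_def by simp
  have sy: "sorted_wrt (\<ge>) ys" unfolding ys_def by (simp add: sorted_wrt_rev)
  have "card {k. k < length xs \<and> ys ! p < xs ! k} = length (filter (\<lambda>x. ys ! p < x) xs)"
    by (simp add: length_filter_conv_card)
  also have "\<dots> = length (filter (\<lambda>x. ys ! p < x) ys)"
    by (metis m mset_filter size_mset)
  also have "\<dots> = card {k. k < length ys \<and> ys ! p < ys ! k}"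
    by (simp add: length_filter_conv_card)
  also have "\<dots> \<le> card {..<p}"
  proof (rule card_mono)
    show "{k. k < length ys \<and> ys ! p < ys ! k} \<subseteq> {..<p}"
    proof
      fix k assume k: "k \<in> {k. k < length ys \<and> ys ! p < ys ! k}"
      show "k \<in> {..<p}"
      proof (rule ccontr)
        assume "k \<notin> {..<p}"
        then have "p \<le> k" by simp
        then have "ys ! k \<le> ys ! p" using sy k
          by (cases "k = p") (auto simp: sorted_wrt_iff_nth_less)
        with k show False by simp
      qed
    qed
  qed simp
  finally show ?thesis unfolding ys_def by simp
qed

lemma orthogonal_subspace_intersection:
  fixes U V :: "real mat"
  assumes U: "U \<in> carrier_mat n n" "transpose_mat U * U = 1\<^sub>m n" and V: "V \<in> carrier_mat n n"
    and S: "S \<subseteq> {..<n}" and T: "T \<subseteq> {..<n}" and card: "card T < card S"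
  shows "\<exists>v \<in> carrier_vec n. v \<noteq> 0\<^sub>v n \<and> (\<forall>k<n. (transpose_mat U *\<^sub>v v) $ k \<noteq> 0 \<longrightarrow> k \<in> S)
           \<and> (\<forall>t\<in>T. (transpose_mat V *\<^sub>v v) $ t = 0)"
proof -
  have fS: "finite S" and fT: "finite T"
    using finite_subset[OF S finite_lessThan] finite_subset[OF T finite_lessThan] .
  obtain c where c: "\<exists>s\<in>S. c s \<noteq> 0" "\<forall>t\<in>T. (\<Sum>s\<in>S. (transpose_mat V * U) $$ (t,s) * c s) = 0"
    using homogeneous_system_nontrivial_solution[OF fT fS card, where a = "\<lambda>t s. (transpose_mat V * U) $$ (t,s)"]
    by blast
  define cv where "cv = vec n (\<lambda>k. if k \<in> S then c k else 0)"
  have cv: "cv \<in> carrier_vec n" unfolding cv_def by simp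
  define v where "v = U *\<^sub>v cv"
  have v: "v \<in> carrier_vec n" unfolding v_def using U cv by simp
  have tU: "transpose_mat U \<in> carrier_mat n n" and tV: "transpose_mat V \<in> carrier_mat n n"
    using U V by auto
  have "transpose_mat U *\<^sub>v v = (transpose_mat U * U) *\<^sub>v cv"
    unfolding v_def using U(1) tU cv by simp
  then have Uv: "transpose_mat U *\<^sub>v v = cv" using U(2) cv by simp
  have "v \<noteq> 0\<^sub>v n"
  proof
    assume v0: "v = 0\<^sub>v n"
    obtain s where s: "s \<in> S" "c s \<noteq> 0" using c(1) by blast
    then have sn: "s < n" using S by auto
    have "cv $ s = (transpose_mat U *\<^sub>v v) $ s" using Uv by simp
    also have "\<dots> = 0" using v0 sn tU by simp
    finally show False using s sn unfolding cv_def by simp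
  qed
  moreover have "(transpose_mat V *\<^sub>v v) $ t = 0" if t: "t \<in> T" for t
  proof -
    have tn: "t < n" using t T by auto
    have "transpose_mat V *\<^sub>v v = (transpose_mat V * U) *\<^sub>v cv"
      unfolding v_def using tV U(1) cv by simp
    then have "(transpose_mat V *\<^sub>v v) $ t = (\<Sum>k<n. (transpose_mat V * U) $$ (t,k) * cv $ k)"
      using mult_mat_vec_index_sum[OF mult_carrier_mat[OF tV U(1)] cv tn] by simp
    also have "\<dots> = (\<Sum>k\<in>S. (transpose_mat V * U) $$ (t,k) * c k)"
      unfolding cv_def using S by (simp add: sum.inter_restrict[symmetric] Int_absorb1 if_distrib cong: if_cong)
    finally show ?thesis using c(2) t by simp
  qed
  moreover have "\<forall>k<n. (transpose_mat U *\<^sub>v v) $ k \<noteq> 0 \<longrightarrow> k \<in> S"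
    unfolding Uv cv_def by auto
  ultimately show ?thesis using v by blast
qed

lemma eigs_desc_le_of_quadratic_form_le:
  fixes A B :: "real mat"
  assumes A: "A \<in> carrier_mat n n" "transpose_mat A = A"
    and B: "B \<in> carrier_mat n n" "transpose_mat B = B"
    and le: "\<And>v. v \<in> carrier_vec n \<Longrightarrow> v \<bullet> (A *\<^sub>v v) \<le> v \<bullet> (B *\<^sub>v v) + \<rho> * (v \<bullet> v)"
    and p: "p < n"
  shows "eigs_desc A ! p \<le> eigs_desc B ! p + \<rho>"
proof -
  obtain U l where U: "U \<in> carrier_mat n n" "transpose_mat U * U = 1\<^sub>m n"
    and A_eq: "A = U * mat_diag n l * transpose_mat U"
    using real_symmetric_orthogonal_diagonalization[OF A] by blast
  obtain V m where V: "V \<in> carrier_mat n n" "transpose_mat V * V = 1\<^sub>m n"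
    and B_eq: "B = V * mat_diag n m * transpose_mat V"
    using real_symmetric_orthogonal_diagonalization[OF B] by blast
  have UU: "U * transpose_mat U = 1\<^sub>m n" and VV: "V * transpose_mat V = 1\<^sub>m n"
    using mat_mult_left_right_inverse[of "transpose_mat U" n U] mat_mult_left_right_inverse[of "transpose_mat V" n V]
      U V by auto
  define la where "la = eigs_desc A ! p"
  define mu where "mu = eigs_desc B ! p"
  define S where "S = {k. k < n \<and> la \<le> l k}"
  define T where "T = {k. k < n \<and> mu < m k}"
  \<comment> \<open>at least \<open>p + 1\<close> eigenvalues of \<open>A\<close> are \<open>\<ge> la\<close>, at most \<open>p\<close> eigenvalues of \<open>B\<close> are \<open>> mu\<close>;
    a vector in the span of the former and orthogonal to the latter separates \<open>la\<close> from \<open>mu\<close>\<close>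
  have "S = {k. k < length (map l [0..<n]) \<and> rev (sort (map l [0..<n])) ! p \<le> map l [0..<n] ! k}"
    unfolding S_def la_def eigs_desc_diagonalization[OF U A_eq] by auto
  then have "Suc p \<le> card S" using card_ge_nth_sort_desc[of p "map l [0..<n]"] p by simp
  moreover have "T = {k. k < length (map m [0..<n]) \<and> rev (sort (map m [0..<n])) ! p < map m [0..<n] ! k}"
    unfolding T_def mu_def eigs_desc_diagonalization[OF V B_eq] by auto
  then have "card T \<le> p" using card_gt_nth_sort_desc[of p "map m [0..<n]"] p by simp
  ultimately obtain v where v: "v \<in> carrier_vec n" "v \<noteq> 0\<^sub>v n"
    and inS: "\<forall>k<n. (transpose_mat U *\<^sub>v v) $ k \<noteq> 0 \<longrightarrow> k \<in> S"
    and offT: "\<forall>t\<in>T. (transpose_mat V *\<^sub>v v) $ t = 0"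
    using orthogonal_subspace_intersection[OF U V(1), of S T] unfolding S_def T_def by fastforce
  have "la * (v \<bullet> v) \<le> v \<bullet> (A *\<^sub>v v)"
    by (rule quadratic_form_ge_on_eigenvalues_above[OF U(1) UU A_eq v(1)]) (use inS S_def in auto)
  also have "\<dots> \<le> v \<bullet> (B *\<^sub>v v) + \<rho> * (v \<bullet> v)" by (rule le[OF v(1)])
  also have "v \<bullet> (B *\<^sub>v v) \<le> mu * (v \<bullet> v)"
    by (rule quadratic_form_le_on_eigenvalues_below[OF V(1) VV B_eq v(1)]) (use offT T_def in force)
  finally have "la * (v \<bullet> v) \<le> (mu + \<rho>) * (v \<bullet> v)" by (simp add: algebra_simps)
  moreover have "0 < v \<bullet> v" using conjugate_square_greater_0_vec[OF v(1)] v(2) by simp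
  ultimately show ?thesis unfolding la_def mu_def by simp
qed

theorem eigs_desc_perturbation:
  fixes A B :: "real mat"
  assumes A: "A \<in> carrier_mat n n" "transpose_mat A = A"
    and B: "B \<in> carrier_mat n n" "transpose_mat B = B"
    and pert: "\<And>v. v \<in> carrier_vec n \<Longrightarrow> \<bar>v \<bullet> (B *\<^sub>v v) - v \<bullet> (A *\<^sub>v v)\<bar> \<le> \<rho> * (v \<bullet> v)"
    and p: "p < n"
  shows "\<bar>eigs_desc B ! p - eigs_desc A ! p\<bar> \<le> \<rho>"
proof -
  have "eigs_desc A ! p \<le> eigs_desc B ! p + \<rho>"
    by (rule eigs_desc_le_of_quadratic_form_le[OF A B _ p]) (use pert in \<open>force simp: abs_le_iff\<close>)
  moreover have "eigs_desc B ! p \<le> eigs_desc A ! p + \<rho>"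
    by (rule eigs_desc_le_of_quadratic_form_le[OF B A _ p]) (use pert in \<open>force simp: abs_le_iff\<close>)
  ultimately show ?thesis by linarith
qed

lemma eigs_desc_nonpos:
  fixes A :: "real mat"
  assumes A: "A \<in> carrier_mat n n" "transpose_mat A = A"
    and nsd: "\<And>v. v \<in> carrier_vec n \<Longrightarrow> v \<bullet> (A *\<^sub>v v) \<le> 0"
    and p: "p < n"
  shows "eigs_desc A ! p \<le> 0"
proof -
  have "eigs_desc A ! p \<le> eigs_desc (0\<^sub>m n n) ! p + 0"
  proof (rule eigs_desc_le_of_quadratic_form_le[OF A _ _ _ p])
    fix v :: "real vec" assume v: "v \<in> carrier_vec n"
    have "0\<^sub>m n n *\<^sub>v v = 0\<^sub>v n" using v by (intro eq_vecI) auto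
    then show "v \<bullet> (A *\<^sub>v v) \<le> v \<bullet> (0\<^sub>m n n *\<^sub>v v) + 0 * (v \<bullet> v)" using nsd[OF v] v by simp
  qed auto
  moreover have "eigs_desc (0\<^sub>m n n :: real mat) = replicate n 0"
  proof -
    have "char_poly (0\<^sub>m n n :: real mat) = (\<Prod>a\<leftarrow>diag_mat (0\<^sub>m n n). [:- a, 1:])"
      by (rule char_poly_upper_triangular[of _ n]) (auto simp: upper_triangular_def)
    also have "diag_mat (0\<^sub>m n n :: real mat) = replicate n 0"
      by (rule nth_equalityI) (auto simp: diag_mat_def)
    finally show ?thesis using eigs_desc_eqI[of "0\<^sub>m n n" n "replicate n 0"] by simp
  qed
  ultimately show ?thesis using p by simp
qed

section \<open>Quadratic forms on a net of the unit ball\<close>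

definition bilinear_form :: "nat \<Rightarrow> (nat \<Rightarrow> nat \<Rightarrow> real) \<Rightarrow> (nat \<Rightarrow> real) \<Rightarrow> (nat \<Rightarrow> real) \<Rightarrow> real" where
  "bilinear_form n X u w = (\<Sum>i<n. \<Sum>j<n. X i j * u i * w j)"

definition sum_sq :: "nat \<Rightarrow> (nat \<Rightarrow> real) \<Rightarrow> real" where
  "sum_sq n v = (\<Sum>i<n. (v i)\<^sup>2)"

lemma sum_sq_nonneg: "0 \<le> sum_sq n v" unfolding sum_sq_def by (simp add: sum_nonneg)

lemma bilinear_form_commute: "\<forall>i<n. \<forall>j<n. X i j = X j i \<Longrightarrow> bilinear_form n X u w = bilinear_form n X w u"
  unfolding bilinear_form_def
  by (subst sum.swap) (auto intro!: sum.cong simp: mult_ac)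

lemma bilinear_form_add_left: "bilinear_form n X (\<lambda>i. a i + b i) w = bilinear_form n X a w + bilinear_form n X b w"
  unfolding bilinear_form_def by (simp add: algebra_simps sum.distrib)
lemma bilinear_form_add_right: "bilinear_form n X u (\<lambda>i. a i + b i) = bilinear_form n X u a + bilinear_form n X u b"
  unfolding bilinear_form_def by (simp add: algebra_simps sum.distrib)
lemma bilinear_form_diff_left: "bilinear_form n X (\<lambda>i. a i - b i) w = bilinear_form n X a w - bilinear_form n X b w"
  unfolding bilinear_form_def by (simp add: algebra_simps sum_subtractf)
lemma bilinear_form_diff_right: "bilinear_form n X u (\<lambda>i. a i - b i) = bilinear_form n X u a - bilinear_form n X u b"
  unfolding bilinear_form_def by (simp add: algebra_simps sum_subtractf)
lemma bilinear_form_scale_left: "bilinear_form n X (\<lambda>i. t * a i) w = t * bilinear_form n X a w"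
  unfolding bilinear_form_def by (simp add: algebra_simps sum_distrib_left)
lemma bilinear_form_scale_right: "bilinear_form n X u (\<lambda>i. t * a i) = t * bilinear_form n X u a"
  unfolding bilinear_form_def by (simp add: algebra_simps sum_distrib_left)

lemma sum_sq_scale: "sum_sq n (\<lambda>i. t * a i) = t\<^sup>2 * sum_sq n a"
  unfolding sum_sq_def by (simp add: power_mult_distrib sum_distrib_left)

lemma sum_sq_parallelogram: "sum_sq n (\<lambda>i. a i + c i) + sum_sq n (\<lambda>i. a i - c i) = 2 * sum_sq n a + 2 * sum_sq n c"
proof -
  have "sum_sq n (\<lambda>i. a i + c i) + sum_sq n (\<lambda>i. a i - c i) = (\<Sum>i<n. (a i + c i)\<^sup>2 + (a i - c i)\<^sup>2)"
    unfolding sum_sq_def by (simp add: sum.distrib)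
  also have "\<dots> = (\<Sum>i<n. 2 * (a i)\<^sup>2 + 2 * (c i)\<^sup>2)"
    by (intro sum.cong) (auto simp: power2_eq_square algebra_simps)
  also have "\<dots> = 2 * sum_sq n a + 2 * sum_sq n c"
    unfolding sum_sq_def by (simp add: sum.distrib sum_distrib_left)
  finally show ?thesis .
qed

lemma sum_sq_add_le: "sum_sq n (\<lambda>i. a i + c i) \<le> 2 * sum_sq n a + 2 * sum_sq n c"
  using sum_sq_parallelogram[of n a c] sum_sq_nonneg[of n "\<lambda>i. a i - c i"] by linarith

lemma bilinear_form_polarization:
  assumes sym: "\<forall>i<n. \<forall>j<n. X i j = X j i"
  shows "bilinear_form n X (\<lambda>i. a i + c i) (\<lambda>i. a i + c i) - bilinear_form n X (\<lambda>i. a i - c i) (\<lambda>i. a i - c i)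
    = 4 * bilinear_form n X a c"
  using bilinear_form_commute[OF sym, of c a]
  by (simp add: bilinear_form_add_left bilinear_form_add_right bilinear_form_diff_left bilinear_form_diff_right)

lemma bilinear_form_diff_squares:
  assumes sym: "\<forall>i<n. \<forall>j<n. X i j = X j i"
  shows "bilinear_form n X v v - bilinear_form n X y y = bilinear_form n X (\<lambda>i. v i - y i) (\<lambda>i. v i + y i)"
  using bilinear_form_commute[OF sym, of v y]
  by (simp add: bilinear_form_add_left bilinear_form_add_right bilinear_form_diff_left bilinear_form_diff_right)

lemma bilinear_form_sum_sq_zero: "sum_sq n v = 0 \<Longrightarrow> bilinear_form n X v v = 0"
proof -
  assume "sum_sq n v = 0"
  then have "\<forall>i\<in>{..<n}. (v i)\<^sup>2 = 0" unfolding sum_sq_def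
    using sum_nonneg_eq_0_iff[of "{..<n}" "\<lambda>i. (v i)\<^sup>2"] by simp
  then show ?thesis unfolding bilinear_form_def by simp
qed

text \<open>Rounding towards zero moves a vector by at most \<open>1/4\<close> in norm
  and does not increase its norm, so the rounded points of the unit ball form a \<open>1/4\<close>-net of at most
  \<open>(9 n)\<^sup>n\<close> points.\<close>

definition round_toward_zero :: "real \<Rightarrow> int" where "round_toward_zero x = (if 0 \<le> x then \<lfloor>x\<rfloor> else - \<lfloor>- x\<rfloor>)"

definition grid_scale :: "nat \<Rightarrow> real" where "grid_scale n = 4 * sqrt (real n)"

definition grid_round :: "nat \<Rightarrow> (nat \<Rightarrow> real) \<Rightarrow> nat \<Rightarrow> real" where
  "grid_round n v = (\<lambda>j. if j < n then of_int (round_toward_zero (v j * grid_scale n)) / grid_scale n else 0)"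

lemma round_toward_zero_bounds:
  "\<bar>of_int (round_toward_zero x)\<bar> \<le> \<bar>x\<bar>" "\<bar>x - of_int (round_toward_zero x)\<bar> \<le> 1"
  unfolding round_toward_zero_def by (cases "0 \<le> x"; simp; linarith)+

lemma grid_round_bounds:
  assumes n: "n > 0" and j: "j < n"
  shows "\<bar>grid_round n v j\<bar> \<le> \<bar>v j\<bar>" "\<bar>v j - grid_round n v j\<bar> \<le> 1 / grid_scale n"
proof -
  have s: "grid_scale n > 0" using n unfolding grid_scale_def by simp
  have "\<bar>of_int (round_toward_zero (v j * grid_scale n))\<bar> \<le> \<bar>v j\<bar> * grid_scale n" using round_toward_zero_bounds(1)[of "v j * grid_scale n"] s
    by (simp add: abs_mult)
  then show "\<bar>grid_round n v j\<bar> \<le> \<bar>v j\<bar>" unfolding grid_round_def using j s by (simp add: divide_le_eq abs_divide)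
  have "\<bar>v j * grid_scale n - of_int (round_toward_zero (v j * grid_scale n))\<bar> \<le> 1" by (rule round_toward_zero_bounds(2))
  then have "\<bar>(v j - grid_round n v j) * grid_scale n\<bar> \<le> 1" unfolding grid_round_def using j s by (simp add: algebra_simps)
  then show "\<bar>v j - grid_round n v j\<bar> \<le> 1 / grid_scale n" using s by (simp add: abs_mult le_divide_eq)
qed

lemma sum_sq_grid_round:
  assumes n: "n > 0"
  shows "sum_sq n (grid_round n v) \<le> sum_sq n v" "sum_sq n (\<lambda>i. v i - grid_round n v i) \<le> 1/16"
proof -
  show "sum_sq n (grid_round n v) \<le> sum_sq n v" unfolding sum_sq_def
    by (intro sum_mono) (use grid_round_bounds(1)[OF n] in \<open>auto simp: abs_le_square_iff\<close>)
  have s: "grid_scale n > 0" using n unfolding grid_scale_def by simp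
  have sq: "(grid_scale n)\<^sup>2 = 16 * real n" unfolding grid_scale_def by (simp add: power_mult_distrib)
  have "sum_sq n (\<lambda>i. v i - grid_round n v i) \<le> (\<Sum>i<n. (1 / grid_scale n)\<^sup>2)" unfolding sum_sq_def
  proof (intro sum_mono)
    fix i assume "i \<in> {..<n}"
    then have "\<bar>v i - grid_round n v i\<bar> \<le> \<bar>1 / grid_scale n\<bar>" using grid_round_bounds(2)[OF n, of i v] s by simp
    then show "(v i - grid_round n v i)\<^sup>2 \<le> (1 / grid_scale n)\<^sup>2" by (simp only: abs_le_square_iff)
  qed
  also have "\<dots> = 1/16" using n by (simp add: power_divide sq)
  finally show "sum_sq n (\<lambda>i. v i - grid_round n v i) \<le> 1/16" .
qed

lemma abs_le_one_of_sum_sq_le_one: "sum_sq n v \<le> 1 \<Longrightarrow> i < n \<Longrightarrow> \<bar>v i\<bar> \<le> 1"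
proof -
  assume v: "sum_sq n v \<le> 1" and i: "i < n"
  have "(v i)\<^sup>2 \<le> sum_sq n v" unfolding sum_sq_def using i by (intro member_le_sum) auto
  then have "(v i)\<^sup>2 \<le> 1" using v by simp
  then show ?thesis by (simp add: abs_square_le_1)
qed

lemma quadratic_form_le_on_unit_ball:
  assumes "sum_sq n v \<le> 1"
  shows "\<bar>bilinear_form n X v v\<bar> \<le> (\<Sum>i<n. \<Sum>j<n. \<bar>X i j\<bar>)"
proof -
  have "\<bar>bilinear_form n X v v\<bar> \<le> (\<Sum>i<n. \<Sum>j<n. \<bar>X i j * v i * v j\<bar>)"
    unfolding bilinear_form_def by (rule order_trans[OF sum_abs]) (intro sum_mono sum_abs)
  also have "\<dots> \<le> (\<Sum>i<n. \<Sum>j<n. \<bar>X i j\<bar>)"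
  proof (intro sum_mono)
    fix i j assume "i \<in> {..<n}" "j \<in> {..<n}"
    then have "\<bar>v i\<bar> * \<bar>v j\<bar> \<le> 1"
      using abs_le_one_of_sum_sq_le_one[OF assms] by (simp add: mult_le_one)
    then show "\<bar>X i j * v i * v j\<bar> \<le> \<bar>X i j\<bar>"
      by (simp add: abs_mult mult.assoc mult_left_le)
  qed
  finally show ?thesis .
qed

lemma quadratic_form_le_of_unit_ball:
  assumes ball: "\<And>v. sum_sq n v \<le> 1 \<Longrightarrow> \<bar>bilinear_form n X v v\<bar> \<le> S"
  shows "\<bar>bilinear_form n X v v\<bar> \<le> S * sum_sq n v"
proof (cases "sum_sq n v = 0")
  case True
  then show ?thesis using bilinear_form_sum_sq_zero by simp
next
  case False
  then have pos: "sum_sq n v > 0" using sum_sq_nonneg[of n v] by simp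
  define t where "t = 1 / sqrt (sum_sq n v)"
  have t2: "t\<^sup>2 * sum_sq n v = 1" unfolding t_def using pos by (simp add: power_divide)
  have "\<bar>bilinear_form n X (\<lambda>i. t * v i) (\<lambda>i. t * v i)\<bar> \<le> S"
    by (rule ball) (simp add: sum_sq_scale t2)
  then have "t\<^sup>2 * \<bar>bilinear_form n X v v\<bar> * sum_sq n v \<le> S * sum_sq n v"
    using pos by (simp add: bilinear_form_scale_left bilinear_form_scale_right abs_mult power2_eq_square mult.assoc)
  moreover have "\<bar>bilinear_form n X v v\<bar> = t\<^sup>2 * \<bar>bilinear_form n X v v\<bar> * sum_sq n v"
    using t2 by (metis mult.commute mult.left_commute mult_1_right)
  ultimately show ?thesis by simp
qed

lemma bilinear_form_le_of_quadratic_form_le: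
  assumes sym: "\<forall>i<n. \<forall>j<n. X i j = X j i"
    and quad: "\<And>v. \<bar>bilinear_form n X v v\<bar> \<le> S * sum_sq n v"
  shows "\<bar>bilinear_form n X a c\<bar> \<le> S * (sum_sq n a + sum_sq n c) / 2"
proof -
  have "4 * \<bar>bilinear_form n X a c\<bar>
      = \<bar>bilinear_form n X (\<lambda>i. a i + c i) (\<lambda>i. a i + c i) - bilinear_form n X (\<lambda>i. a i - c i) (\<lambda>i. a i - c i)\<bar>"
    unfolding bilinear_form_polarization[OF sym] by (simp add: abs_mult)
  also have "\<dots> \<le> S * sum_sq n (\<lambda>i. a i + c i) + S * sum_sq n (\<lambda>i. a i - c i)"
    using quad[of "\<lambda>i. a i + c i"] quad[of "\<lambda>i. a i - c i"] by linarith
  also have "\<dots> = S * (sum_sq n (\<lambda>i. a i + c i) + sum_sq n (\<lambda>i. a i - c i))"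
    by (simp only: distrib_left)
  also have "\<dots> = 4 * (S * (sum_sq n a + sum_sq n c) / 2)"
    unfolding sum_sq_parallelogram by (simp add: algebra_simps)
  finally show ?thesis by simp
qed

lemma quadratic_form_le_of_grid:
  assumes sym: "\<forall>i<n. \<forall>j<n. X i j = X j i" and n: "0 < n"
    and grid: "\<And>v. sum_sq n v \<le> 1 \<Longrightarrow> \<bar>bilinear_form n X (grid_round n v) (grid_round n v)\<bar> \<le> T"
  shows "\<bar>bilinear_form n X v v\<bar> \<le> 2 * T * sum_sq n v"
proof -
  define K where "K = (\<lambda>v. \<bar>bilinear_form n X v v\<bar>) ` {v. sum_sq n v \<le> 1}"
  define S where "S = Sup K"
  have "(\<lambda>_. 0) \<in> {v. sum_sq n v \<le> 1}" by (simp add: sum_sq_def)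
  then have "K \<noteq> {}" unfolding K_def by blast
  moreover have "bdd_above K"
    unfolding K_def using quadratic_form_le_on_unit_ball by (intro bdd_aboveI) auto
  ultimately have upper: "\<And>v. sum_sq n v \<le> 1 \<Longrightarrow> \<bar>bilinear_form n X v v\<bar> \<le> S"
    and least: "(\<And>v. sum_sq n v \<le> 1 \<Longrightarrow> \<bar>bilinear_form n X v v\<bar> \<le> T + S / 2) \<Longrightarrow> S \<le> T + S / 2"
    unfolding S_def K_def by (auto intro: cSup_upper cSup_least)
  have S0: "0 \<le> S" using upper[of "\<lambda>_. 0"] by (simp add: sum_sq_def)
  note quad = quadratic_form_le_of_unit_ball[OF upper]
  have "\<bar>bilinear_form n X v v\<bar> \<le> T + S / 2" if v: "sum_sq n v \<le> 1" for v
  proof -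
    define y where "y = grid_round n v"
    \<comment> \<open>\<open>q(v) - q(y) = B(v - y, v + y)\<close>, rescaled so that both arguments have comparable norms\<close>
    define a where "a = (\<lambda>i. sqrt 8 * (v i - y i))"
    define c where "c = (\<lambda>i. (1 / sqrt 8) * (v i + y i))"
    have diff: "bilinear_form n X v v - bilinear_form n X y y = bilinear_form n X a c"
      unfolding a_def c_def bilinear_form_diff_squares[OF sym]
      by (simp only: bilinear_form_scale_left bilinear_form_scale_right) simp
    have "sum_sq n (\<lambda>i. v i - y i) \<le> 1/16" unfolding y_def using sum_sq_grid_round(2)[OF n] .
    moreover have "sum_sq n (\<lambda>i. v i + y i) \<le> 4"
      using sum_sq_add_le[of n v y] sum_sq_grid_round(1)[OF n, of v] v unfolding y_def by linarith
    ultimately have "sum_sq n a + sum_sq n c \<le> 1"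
      unfolding a_def c_def sum_sq_scale by (simp add: power_divide)
    then have "\<bar>bilinear_form n X a c\<bar> \<le> S / 2"
      using bilinear_form_le_of_quadratic_form_le[OF sym quad, of a c] S0
      by (smt (verit) divide_right_mono mult_left_le)
    moreover have "\<bar>bilinear_form n X y y\<bar> \<le> T" using grid v unfolding y_def by blast
    ultimately show ?thesis using diff by linarith
  qed
  then have "S \<le> 2 * T" using least by simp
  then show ?thesis using quad[of v] sum_sq_nonneg[of n v] by (smt (verit) mult_right_mono)
qed

definition grid_net :: "nat \<Rightarrow> (nat \<Rightarrow> real) set" where
  "grid_net n = (\<lambda>k j. if j < n then of_int (k j) / grid_scale n else 0) `
      (PiE {..<n} (\<lambda>_. {- \<lfloor>grid_scale n\<rfloor>..\<lfloor>grid_scale n\<rfloor>}))"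

lemma grid_round_in_grid_net:
  assumes n: "n > 0" and v: "sum_sq n v \<le> 1"
  shows "grid_round n v \<in> grid_net n"
proof -
  define s where "s = grid_scale n"
  have s: "s \<ge> 0" unfolding s_def grid_scale_def by simp
  define k where "k = restrict (\<lambda>j. round_toward_zero (v j * s)) {..<n}"
  have kb: "k j \<in> {- \<lfloor>s\<rfloor>..\<lfloor>s\<rfloor>}" if j: "j < n" for j
  proof -
    have vj: "\<bar>v j\<bar> \<le> 1" by (rule abs_le_one_of_sum_sq_le_one[OF v j])
    have "\<bar>real_of_int (round_toward_zero (v j * s))\<bar> \<le> \<bar>v j * s\<bar>" by (rule round_toward_zero_bounds(1))
    also have "\<dots> \<le> s" using vj s by (simp add: abs_mult mult_left_le_one_le)
    finally have "\<bar>real_of_int (round_toward_zero (v j * s))\<bar> \<le> s" .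
    then have "real_of_int (round_toward_zero (v j * s)) \<le> s" "real_of_int (- round_toward_zero (v j * s)) \<le> s" by linarith+
    then have "round_toward_zero (v j * s) \<le> \<lfloor>s\<rfloor>" "- round_toward_zero (v j * s) \<le> \<lfloor>s\<rfloor>" by (simp_all add: le_floor_iff)
    then show ?thesis unfolding k_def using j by simp
  qed
  have "k \<in> PiE {..<n} (\<lambda>_. {- \<lfloor>s\<rfloor>..\<lfloor>s\<rfloor>})"
    using kb unfolding k_def by (auto simp: PiE_def extensional_def Pi_def)
  moreover have "grid_round n v = (\<lambda>j. if j < n then of_int (k j) / grid_scale n else 0)"
    unfolding grid_round_def k_def s_def by auto
  ultimately show ?thesis unfolding grid_net_def s_def by blast
qed

lemma grid_net_card:
  assumes n: "n > 0"
  shows "finite (grid_net n)" "real (card (grid_net n)) \<le> (9 * real n) ^ n"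
proof -
  define s where "s = grid_scale n"
  define R where "R = \<lfloor>s\<rfloor>"
  have fin: "finite (PiE {..<n} (\<lambda>_. {- R..R}))" by (intro finite_PiE) auto
  show "finite (grid_net n)" unfolding grid_net_def using fin unfolding R_def s_def by simp
  have "card (grid_net n) \<le> card (PiE {..<n} (\<lambda>_. {- R..R}))"
    unfolding grid_net_def R_def s_def by (rule card_image_le) (use fin in \<open>simp add: R_def s_def\<close>)
  also have "\<dots> = (nat (2 * R + 1)) ^ n" by (simp add: card_PiE)
  finally have c: "real (card (grid_net n)) \<le> real (nat (2 * R + 1)) ^ n"
    by (metis of_nat_le_iff of_nat_power)
  have s0: "s \<ge> 0" unfolding s_def grid_scale_def by simp
  have "real n * 1 \<le> real n * real n" using n by (intro mult_left_mono) auto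
  then have "sqrt (real n) \<le> sqrt ((real n)\<^sup>2)" by (intro real_sqrt_le_mono) (simp add: power2_eq_square)
  then have sqn: "sqrt (real n) \<le> real n" by simp
  have "real_of_int R \<le> s" unfolding R_def by simp
  moreover have "s \<le> 4 * real n" unfolding s_def grid_scale_def using sqn by simp
  moreover have "0 \<le> R" unfolding R_def using s0 by simp
  ultimately have "real (nat (2 * R + 1)) \<le> 9 * real n" using n by simp
  then have "real (nat (2 * R + 1)) ^ n \<le> (9 * real n) ^ n" by (intro power_mono) auto
  then show "real (card (grid_net n)) \<le> (9 * real n) ^ n" by (rule order_trans[OF c])
qed

section \<open>Hoeffding's inequality for independent Bernoulli trials\<close>

lemma hoeffding_Pi_bernoulli_exact:
  fixes E :: "'e set" and p c :: "'e \<Rightarrow> real"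
  assumes fin: "finite E" and p: "\<And>e. e \<in> E \<Longrightarrow> 0 \<le> p e \<and> p e \<le> 1" and eps: "0 < \<epsilon>"
    and pos: "0 < (\<Sum>e\<in>E. (c e)\<^sup>2)"
  shows "measure_pmf.prob (Pi_pmf E dflt (\<lambda>e. bernoulli_pmf (p e)))
           {f. \<epsilon> \<le> \<bar>\<Sum>e\<in>E. c e * (of_bool (f e) - p e)\<bar>} \<le> 2 * exp (- 2 * \<epsilon>\<^sup>2 / (\<Sum>e\<in>E. (c e)\<^sup>2))"
proof -
  define M where "M = Pi_pmf E dflt (\<lambda>e. bernoulli_pmf (p e))"
  define X where "X = (\<lambda>e (f :: 'e \<Rightarrow> bool). c e * of_bool (f e))"
  have expX: "measure_pmf.expectation M (X e) = c e * p e" if e: "e \<in> E" for e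
  proof -
    have "measure_pmf.expectation M (X e) = measure_pmf.expectation (map_pmf (\<lambda>f. f e) M) (\<lambda>b. c e * of_bool b)"
      unfolding X_def by simp
    also have "map_pmf (\<lambda>f. f e) M = bernoulli_pmf (p e)"
      unfolding M_def using Pi_pmf_component[OF fin, of e dflt "\<lambda>e. bernoulli_pmf (p e)"] e by simp
    also have "measure_pmf.expectation (bernoulli_pmf (p e)) (\<lambda>b. c e * of_bool b) = c e * p e"
      using p e by simp
    finally show ?thesis .
  qed
  interpret H: Hoeffding_ineq "measure_pmf M" E X "\<lambda>e. min 0 (c e)" "\<lambda>e. max 0 (c e)" "\<Sum>e\<in>E. c e * p e"
  proof unfold_locales
    show "finite E" by fact
    have "prob_space.indep_vars (measure_pmf M) (\<lambda>_. count_space UNIV) (\<lambda>x f. f x) E"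
      unfolding M_def by (rule indep_vars_Pi_pmf[OF fin])
    then show "prob_space.indep_vars (measure_pmf M) (\<lambda>_. borel) X E"
      unfolding X_def
      by (rule prob_space.indep_vars_compose2[OF measure_pmf.prob_space_axioms, where Y = "\<lambda>e b. c e * of_bool b"]) auto
    show "AE x in measure_pmf M. X i x \<in> {min 0 (c i)..max 0 (c i)}" for i
      unfolding X_def by auto
    show "(\<Sum>e\<in>E. c e * p e) \<equiv> (\<Sum>i\<in>E. measure_pmf.expectation M (X i))"
      using expX by simp
  qed
  have "(\<Sum>i\<in>E. (max 0 (c i) - min 0 (c i))\<^sup>2) = (\<Sum>e\<in>E. (c e)\<^sup>2)"
    by (intro sum.cong) (auto simp: max_def min_def power2_eq_square)
  then have "measure_pmf.prob M {x \<in> space (measure_pmf M). \<epsilon> \<le> \<bar>(\<Sum>i\<in>E. X i x) - (\<Sum>e\<in>E. c e * p e)\<bar>}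
          \<le> 2 * exp (- 2 * \<epsilon>\<^sup>2 / (\<Sum>e\<in>E. (c e)\<^sup>2))"
    using H.Hoeffding_ineq_abs_ge[of \<epsilon>] eps pos by simp
  also have "{x \<in> space (measure_pmf M). \<epsilon> \<le> \<bar>(\<Sum>i\<in>E. X i x) - (\<Sum>e\<in>E. c e * p e)\<bar>}
           = {f. \<epsilon> \<le> \<bar>\<Sum>e\<in>E. c e * (of_bool (f e) - p e)\<bar>}"
    unfolding X_def by (auto simp: sum_subtractf[symmetric] right_diff_distrib)
  finally show ?thesis unfolding M_def .
qed

lemma hoeffding_Pi_bernoulli:
  fixes E :: "'e set" and p c :: "'e \<Rightarrow> real"
  assumes fin: "finite E" and p: "\<And>e. e \<in> E \<Longrightarrow> 0 \<le> p e \<and> p e \<le> 1" and eps: "0 < \<epsilon>"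
    and D: "(\<Sum>e\<in>E. (c e)\<^sup>2) \<le> D"
  shows "measure_pmf.prob (Pi_pmf E dflt (\<lambda>e. bernoulli_pmf (p e)))
           {f. \<epsilon> \<le> \<bar>\<Sum>e\<in>E. c e * (of_bool (f e) - p e)\<bar>} \<le> 2 * exp (- 2 * \<epsilon>\<^sup>2 / D)"
proof (cases "(\<Sum>e\<in>E. (c e)\<^sup>2) = 0")
  case True
  then have "\<forall>e\<in>E. c e = 0" using fin by (subst (asm) sum_nonneg_eq_0_iff) auto
  then have "{f. \<epsilon> \<le> \<bar>\<Sum>e\<in>E. c e * (of_bool (f e) - p e)\<bar>} = {}" using eps by auto
  then show ?thesis by simp
next
  case False
  then have pos: "0 < (\<Sum>e\<in>E. (c e)\<^sup>2)" by (simp add: order_less_le sum_nonneg)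
  have "2 * \<epsilon>\<^sup>2 / D \<le> 2 * \<epsilon>\<^sup>2 / (\<Sum>e\<in>E. (c e)\<^sup>2)"
    using D pos eps by (intro divide_left_mono) auto
  then have "2 * exp (- 2 * \<epsilon>\<^sup>2 / (\<Sum>e\<in>E. (c e)\<^sup>2)) \<le> 2 * exp (- 2 * \<epsilon>\<^sup>2 / D)" by simp
  moreover have "measure_pmf.prob (Pi_pmf E dflt (\<lambda>e. bernoulli_pmf (p e)))
      {f. \<epsilon> \<le> \<bar>\<Sum>e\<in>E. c e * (of_bool (f e) - p e)\<bar>} \<le> 2 * exp (- 2 * \<epsilon>\<^sup>2 / (\<Sum>e\<in>E. (c e)\<^sup>2))"
    by (rule hoeffding_Pi_bernoulli_exact) (use fin p eps pos in auto)
  ultimately show ?thesis by linarith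
qed

section \<open>Ultrametric graphons\<close>

lemma nested_partitions_cover:
  "nested_partitions M Ups \<Longrightarrow> l \<in> {1..M} \<Longrightarrow> \<Union>(Ups l) = {0..1}"
  unfolding nested_partitions_def by blast

lemma nested_partitions_refine:
  assumes "nested_partitions M Ups" "l \<in> {1..<M}" "I \<in> Ups l"
  obtains S where "S \<subseteq> Ups (Suc l)" "\<Union>S = I"
  using assms unfolding nested_partitions_def by metis

lemma nested_partitions_eqI:
  assumes "nested_partitions M Ups" "l \<in> {1..M}" "I \<in> Ups l" "J \<in> Ups l" "x \<in> I" "x \<in> J"
  shows "I = J"
proof -
  have "pairwise disjnt (Ups l)" using assms(1,2) unfolding nested_partitions_def by blast
  then show ?thesis using assms(3-6) unfolding pairwise_def disjnt_def by blast
qed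

lemma nested_partitions_laminar:
  assumes np: "nested_partitions M Ups" and l: "1 \<le> l" and ll': "l \<le> l'" and l'M: "l' \<le> M"
    and J: "J \<in> Ups l" and J': "J' \<in> Ups l'" and ne: "J \<inter> J' \<noteq> {}"
  shows "J' \<subseteq> J"
  using ll' l'M J' ne
proof (induction l' arbitrary: J' rule: dec_induct)
  case base
  then obtain x where "x \<in> J" "x \<in> J'" by blast
  then show ?case using nested_partitions_eqI[OF np _ J base(2)] l base(1) by auto
next
  case (step k)
  obtain p where p: "p \<in> J" "p \<in> J'" using step.prems(3) by blast
  have kM: "k \<in> {1..M}" "Suc k \<in> {1..M}" "k \<in> {1..<M}" using step l by auto
  have "p \<in> {0..1}" using nested_partitions_cover[OF np kM(2)] step.prems(2) p(2) by blast
  then obtain K where K: "K \<in> Ups k" "p \<in> K" using nested_partitions_cover[OF np kM(1)] by blast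
  obtain S where S: "S \<subseteq> Ups (Suc k)" "\<Union>S = K" by (rule nested_partitions_refine[OF np kM(3) K(1)])
  then obtain K' where K': "K' \<in> S" "p \<in> K'" using K(2) by blast
  then have "J' \<subseteq> K" using nested_partitions_eqI[OF np kM(2) _ step.prems(2) K'(2) p(2)] S by blast
  moreover have "K \<subseteq> J" using step.IH[OF _ K(1)] K(2) p(1) step by auto
  ultimately show ?case by blast
qed

lemma ex1_smallest_common_interval:
  assumes np: "nested_partitions M Ups" and x: "x \<in> {0..1}" and y: "y \<in> {0..1}"
  shows "\<exists>!J. J \<in> family M Ups \<and> x \<in> J \<and> y \<in> J \<and> (\<forall>J'\<in>family M Ups. x \<in> J' \<and> y \<in> J' \<longrightarrow> J \<subseteq> J')"
proof -
  define L where "L = {l \<in> {1..M}. \<exists>J\<in>Ups l. x \<in> J \<and> y \<in> J}"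
  have M1: "1 \<le> M" and U1: "Ups 1 = {{0..1}}" using np unfolding nested_partitions_def by auto
  have "1 \<in> L" unfolding L_def using M1 U1 x y by auto
  moreover have "finite L" unfolding L_def by simp
  ultimately have l0: "Max L \<in> L" and lmax: "\<And>l. l \<in> L \<Longrightarrow> l \<le> Max L" by (auto intro: Max_in)
  then obtain J0 where J0: "J0 \<in> Ups (Max L)" "x \<in> J0" "y \<in> J0" and l0M: "Max L \<in> {1..M}"
    unfolding L_def by auto
  have fam: "J0 \<in> family M Ups" using J0 l0M unfolding family_def by blast
  have least: "J0 \<subseteq> J'" if J': "J' \<in> family M Ups" "x \<in> J'" "y \<in> J'" for J'
  proof -
    obtain l' where l': "l' \<in> {1..M}" "J' \<in> Ups l'" using J'(1) unfolding family_def by blast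
    then have "l' \<in> L" unfolding L_def using J' by auto
    then have "l' \<le> Max L" by (rule lmax)
    moreover have "J' \<inter> J0 \<noteq> {}" using J' J0 by blast
    ultimately show ?thesis using nested_partitions_laminar[OF np _ _ _ l'(2) J0(1)] l' l0M by auto
  qed
  show ?thesis
  proof (rule ex1I[of _ J0])
    show "J0 \<in> family M Ups \<and> x \<in> J0 \<and> y \<in> J0 \<and> (\<forall>J'\<in>family M Ups. x \<in> J' \<and> y \<in> J' \<longrightarrow> J0 \<subseteq> J')"
      using fam J0 least by auto
  next
    fix J assume "J \<in> family M Ups \<and> x \<in> J \<and> y \<in> J \<and> (\<forall>J'\<in>family M Ups. x \<in> J' \<and> y \<in> J' \<longrightarrow> J \<subseteq> J')"
    then show "J = J0" using least fam J0 by blast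
  qed
qed

lemma graphon_bounds:
  assumes set: "ultrametric_setting M Ups h w" and x: "x \<in> {0..1}" and y: "y \<in> {0..1}"
  shows "0 \<le> graphon M Ups h w x y \<and> graphon M Ups h w x y \<le> 1"
proof (cases "x = y")
  case True
  then show ?thesis using set unfolding graphon_def udist_def ultrametric_setting_def
    by (auto simp: less_imp_le)
next
  case False
  have np: "nested_partitions M Ups" using set unfolding ultrametric_setting_def by simp
  let ?P = "\<lambda>J. J \<in> family M Ups \<and> x \<in> J \<and> y \<in> J \<and> (\<forall>J'\<in>family M Ups. x \<in> J' \<and> y \<in> J' \<longrightarrow> J \<subseteq> J')"
  have "?P (THE J. ?P J)" by (rule theI'[OF ex1_smallest_common_interval[OF np x y]])
  then have "(THE J. ?P J) \<in> family M Ups" by simp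
  then have "h (THE J. ?P J) > 0" using set unfolding ultrametric_setting_def by blast
  then have "0 < w (h (THE J. ?P J)) \<and> w (h (THE J. ?P J)) \<le> 1"
    using set unfolding ultrametric_setting_def by (meson less_imp_le)
  then show ?thesis using False unfolding graphon_def udist_def by (simp add: less_imp_le)
qed

lemma graphon_commute: "graphon M Ups h w x y = graphon M Ups h w y x"
proof -
  have "(\<lambda>J. J \<in> family M Ups \<and> x \<in> J \<and> y \<in> J \<and> (\<forall>J'\<in>family M Ups. x \<in> J' \<and> y \<in> J' \<longrightarrow> J \<subseteq> J'))
      = (\<lambda>J. J \<in> family M Ups \<and> y \<in> J \<and> x \<in> J \<and> (\<forall>J'\<in>family M Ups. y \<in> J' \<and> x \<in> J' \<longrightarrow> J \<subseteq> J'))"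
    by auto
  then show ?thesis unfolding graphon_def udist_def by (simp add: eq_commute)
qed

section \<open>Laplacians of Bernoulli random graphs\<close>

lemma laplacian_carrier[simp]: "laplacian n a \<in> carrier_mat n n"
  and laplacian_dims[simp]: "dim_row (laplacian n a) = n" "dim_col (laplacian n a) = n"
  by (simp_all add: laplacian_def)

lemma laplacian_index:
  "i < n \<Longrightarrow> j < n \<Longrightarrow> laplacian n a $$ (i,j) = a i j - (if i = j then (\<Sum>l<n. a i l) else 0)"
  by (simp add: laplacian_def)

lemma transpose_laplacian:
  "\<forall>i<n. \<forall>j<n. a i j = a j i \<Longrightarrow> transpose_mat (laplacian n a) = laplacian n a"
  by (rule eq_matI) (auto simp: laplacian_index)

lemma laplacian_off_diagonal: "laplacian n a = laplacian n (\<lambda>i j. if i = j then 0 else a i j)"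
proof (rule eq_matI)
  fix i j assume "i < dim_row (laplacian n (\<lambda>i j. if i = j then 0 else a i j))"
    "j < dim_col (laplacian n (\<lambda>i j. if i = j then 0 else a i j))"
  then have i: "i < n" and j: "j < n" by auto
  show "laplacian n a $$ (i,j) = laplacian n (\<lambda>i j. if i = j then 0 else a i j) $$ (i,j)"
  proof (cases "i = j")
    case True
    have "(\<Sum>l<n. if j = l then 0 else a j l) = (\<Sum>l<n. a j l) - a j j"
      using j by (simp add: sum.remove[of "{..<n}" j] sum.If_cases Diff_eq Int_commute)
    then show ?thesis using True j by (simp add: laplacian_index)
  qed (use i j in \<open>simp add: laplacian_index\<close>)
qed auto

lemma laplacian_quadratic_form:
  assumes v: "v \<in> carrier_vec n"
  shows "v \<bullet> (laplacian n a *\<^sub>v v) = (\<Sum>i<n. v $ i * (\<Sum>j<n. a i j * v $ j) - (v $ i)\<^sup>2 * (\<Sum>j<n. a i j))"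
proof -
  have row: "(laplacian n a *\<^sub>v v) $ i = (\<Sum>j<n. a i j * v $ j) - (\<Sum>l<n. a i l) * v $ i" if i: "i < n" for i
  proof -
    have "(laplacian n a *\<^sub>v v) $ i = (\<Sum>j<n. a i j * v $ j - (if i = j then (\<Sum>l<n. a i l) * v $ j else 0))"
      using i by (subst mult_mat_vec_index_sum[OF laplacian_carrier v i])
        (simp add: laplacian_index left_diff_distrib if_distrib[where f = "\<lambda>x. x * _"] cong: if_cong)
    also have "\<dots> = (\<Sum>j<n. a i j * v $ j) - (\<Sum>l<n. a i l) * v $ i"
      using i by (simp add: sum_subtractf)
    finally show ?thesis .
  qed
  have "v \<bullet> (laplacian n a *\<^sub>v v) = (\<Sum>i<n. v $ i * (laplacian n a *\<^sub>v v) $ i)"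
    by (rule scalar_prod_eq_sum) (rule mult_mat_vec_carrier[OF laplacian_carrier v])
  also have "\<dots> = (\<Sum>i<n. v $ i * (\<Sum>j<n. a i j * v $ j) - (v $ i)\<^sup>2 * (\<Sum>j<n. a i j))"
    by (intro sum.cong refl) (auto simp: row right_diff_distrib power2_eq_square mult_ac simp del: index_mult_mat_vec)
  finally show ?thesis .
qed

lemma laplacian_quadratic_form_diff:
  assumes v: "v \<in> carrier_vec n"
  shows "v \<bullet> (laplacian n b *\<^sub>v v) - v \<bullet> (laplacian n a *\<^sub>v v) = v \<bullet> (laplacian n (\<lambda>i j. b i j - a i j) *\<^sub>v v)"
  unfolding laplacian_quadratic_form[OF v] sum_subtractf[symmetric]
  by (intro sum.cong refl) (simp add: sum_subtractf left_diff_distrib right_diff_distrib)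

lemma laplacian_quadratic_form_nonpos:
  assumes sym: "\<forall>i<n. \<forall>j<n. a i j = a j i" and nn: "\<forall>i<n. \<forall>j<n. 0 \<le> a i j" and v: "v \<in> carrier_vec n"
  shows "v \<bullet> (laplacian n a *\<^sub>v v) \<le> 0"
proof -
  define P where "P = (\<Sum>i<n. \<Sum>j<n. a i j * v $ i * v $ j)"
  define Q where "Q = (\<Sum>i<n. \<Sum>j<n. a i j * (v $ i)\<^sup>2)"
  have Q_swap: "(\<Sum>i<n. \<Sum>j<n. a i j * (v $ j)\<^sup>2) = Q" unfolding Q_def
    by (subst sum.swap) (use sym in \<open>auto intro!: sum.cong\<close>)
  \<comment> \<open>\<open>-2 v\<^sup>T L v = \<Sum>\<^sub>i\<^sub>j a\<^sub>i\<^sub>j (v\<^sub>i - v\<^sub>j)\<^sup>2\<close>\<close>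
  have "0 \<le> (\<Sum>i<n. \<Sum>j<n. a i j * (v $ i - v $ j)\<^sup>2)"
    using nn by (intro sum_nonneg) auto
  also have "\<dots> = 2 * Q - 2 * P"
    using Q_swap unfolding P_def Q_def
    by (simp add: power2_eq_square algebra_simps sum.distrib sum_subtractf sum_distrib_left)
  finally have "P \<le> Q" by simp
  moreover have "v \<bullet> (laplacian n a *\<^sub>v v) = P - Q"
    unfolding laplacian_quadratic_form[OF v] P_def Q_def
    by (simp add: sum_subtractf sum_distrib_left sum_distrib_right mult_ac)
  ultimately show ?thesis by simp
qed

definition upper_pairs :: "nat \<Rightarrow> (nat \<times> nat) set" where
  "upper_pairs n = {(i,j). i < j \<and> j < n}"

lemma finite_upper_pairs[simp]: "finite (upper_pairs n)"
  by (rule finite_subset[of _ "{..<n} \<times> {..<n}"]) (auto simp: upper_pairs_def)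

lemma upper_pairs_Suc: "upper_pairs (Suc n) = upper_pairs n \<union> (\<lambda>i. (i,n)) ` {..<n}"
  by (auto simp: upper_pairs_def less_Suc_eq)

lemma sum_square_split_upper_pairs:
  fixes F :: "nat \<Rightarrow> nat \<Rightarrow> real"
  shows "(\<Sum>i<n. \<Sum>j<n. F i j) = (\<Sum>e\<in>upper_pairs n. F (fst e) (snd e) + F (snd e) (fst e)) + (\<Sum>i<n. F i i)"
proof (induction n)
  case 0 then show ?case by (simp add: upper_pairs_def)
next
  case (Suc n)
  have disj: "upper_pairs n \<inter> (\<lambda>i. (i,n)) ` {..<n} = {}" by (auto simp: upper_pairs_def)
  have "(\<Sum>e\<in>upper_pairs (Suc n). F (fst e) (snd e) + F (snd e) (fst e))
      = (\<Sum>e\<in>upper_pairs n. F (fst e) (snd e) + F (snd e) (fst e)) + (\<Sum>i<n. F i n + F n i)"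
    unfolding upper_pairs_Suc by (subst sum.union_disjoint) (auto simp: disj sum.reindex inj_on_def)
  moreover have "(\<Sum>i<Suc n. \<Sum>j<Suc n. F i j) = (\<Sum>i<n. \<Sum>j<n. F i j) + (\<Sum>i<n. F i n) + (\<Sum>j<n. F n j) + F n n"
    by (simp add: sum.distrib)
  ultimately show ?case using Suc.IH by (simp add: sum.distrib)
qed

definition centered_adj :: "(nat \<Rightarrow> nat \<Rightarrow> real) \<Rightarrow> (nat \<times> nat \<Rightarrow> bool) \<Rightarrow> nat \<Rightarrow> nat \<Rightarrow> real" where
  "centered_adj a f i j = (if i = j then 0 else adj_of f i j - a i j)"

definition bernoulli_graph :: "nat \<Rightarrow> (nat \<Rightarrow> nat \<Rightarrow> real) \<Rightarrow> (nat \<times> nat \<Rightarrow> bool) pmf" where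
  "bernoulli_graph n a = Pi_pmf (upper_pairs n) False (\<lambda>e. bernoulli_pmf (a (fst e) (snd e)))"

lemma centered_adj_commute: "\<forall>i<n. \<forall>j<n. a i j = a j i \<Longrightarrow> \<forall>i<n. \<forall>j<n. centered_adj a f i j = centered_adj a f j i"
  by (auto simp: centered_adj_def adj_of_def)

lemma sum_centered_adj_upper_pairs:
  assumes sym: "\<forall>i<n. \<forall>j<n. a i j = a j i"
  shows "(\<Sum>i<n. \<Sum>j<n. K i j * centered_adj a f i j) =
    (\<Sum>e\<in>upper_pairs n. (K (fst e) (snd e) + K (snd e) (fst e)) * (of_bool (f e) - a (fst e) (snd e)))"
proof -
  have "(\<Sum>i<n. \<Sum>j<n. K i j * centered_adj a f i j) =
     (\<Sum>e\<in>upper_pairs n. K (fst e) (snd e) * centered_adj a f (fst e) (snd e) + K (snd e) (fst e) * centered_adj a f (snd e) (fst e))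
      + (\<Sum>i<n. K i i * centered_adj a f i i)"
    by (rule sum_square_split_upper_pairs)
  also have "(\<Sum>i<n. K i i * centered_adj a f i i) = 0" by (simp add: centered_adj_def)
  also have "(\<Sum>e\<in>upper_pairs n. K (fst e) (snd e) * centered_adj a f (fst e) (snd e) + K (snd e) (fst e) * centered_adj a f (snd e) (fst e))
      = (\<Sum>e\<in>upper_pairs n. (K (fst e) (snd e) + K (snd e) (fst e)) * (of_bool (f e) - a (fst e) (snd e)))"
  proof (intro sum.cong refl)
    fix e assume e: "e \<in> upper_pairs n"
    obtain i j where ij: "e = (i,j)" "i < j" "j < n" using e unfolding upper_pairs_def by auto
    have X1: "centered_adj a f (fst e) (snd e) = of_bool (f e) - a (fst e) (snd e)"
      and X2: "centered_adj a f (snd e) (fst e) = of_bool (f e) - a (fst e) (snd e)"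
      using ij sym by (auto simp: centered_adj_def adj_of_def)
    show "K (fst e) (snd e) * centered_adj a f (fst e) (snd e) + K (snd e) (fst e) * centered_adj a f (snd e) (fst e)
      = (K (fst e) (snd e) + K (snd e) (fst e)) * (of_bool (f e) - a (fst e) (snd e))"
      by (simp only: X1 X2 distrib_right)
  qed
  finally show ?thesis by simp
qed

lemma prob_row_sum_deviation_ge:
  assumes sym: "\<forall>i<n. \<forall>j<n. a i j = a j i"
    and rng: "\<forall>i<n. \<forall>j<n. 0 \<le> a i j \<and> a i j \<le> 1" and r: "r < n" and eps: "0 < \<epsilon>"
  shows "measure_pmf.prob (bernoulli_graph n a) {f. \<epsilon> \<le> \<bar>\<Sum>j<n. centered_adj a f r j\<bar>} \<le> 2 * exp (- 2 * \<epsilon>\<^sup>2 / real n)"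
proof -
  define K where "K = (\<lambda>i j::nat. if r = i then 1 else (0::real))"
  define c where "c = (\<lambda>e. K (fst e) (snd e) + K (snd e) (fst e))"
  have rowK: "(\<Sum>j<n. centered_adj a f r j) = (\<Sum>i<n. \<Sum>j<n. K i j * centered_adj a f i j)" for f
  proof -
    have "(\<Sum>i<n. \<Sum>j<n. K i j * centered_adj a f i j) = (\<Sum>i<n. (if r = i then 1 else 0) * (\<Sum>j<n. centered_adj a f i j))"
      unfolding K_def by (intro sum.cong) (auto simp: sum_distrib_left)
    also have "\<dots> = (\<Sum>j<n. centered_adj a f r j)"
      using r by (simp add: if_distrib[where f = "\<lambda>x. x * _"] cong: if_cong)
    finally show ?thesis by simp
  qed
  have c01: "c e = 0 \<or> c e = 1" if "e \<in> upper_pairs n" for e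
    using that unfolding c_def K_def upper_pairs_def by auto
  have "(\<Sum>e\<in>upper_pairs n. (c e)\<^sup>2) = (\<Sum>e\<in>upper_pairs n. c e)"
    by (intro sum.cong refl) (use c01 in force)
  also have "\<dots> = (\<Sum>i<n. \<Sum>j<n. K i j) - (\<Sum>i<n. K i i)"
    unfolding c_def using sum_square_split_upper_pairs[of K n] by simp
  also have "\<dots> \<le> real n"
  proof -
    have "(\<Sum>i<n. \<Sum>j<n. K i j) = real n" unfolding K_def using r
      by (simp add: if_distrib cong: if_cong)
    moreover have "(\<Sum>i<n. K i i) \<ge> 0" unfolding K_def by (simp add: sum_nonneg)
    ultimately show ?thesis by simp
  qed
  finally have cD: "(\<Sum>e\<in>upper_pairs n. (c e)\<^sup>2) \<le> real n" .
  have pr: "\<forall>e\<in>upper_pairs n. 0 \<le> a (fst e) (snd e) \<and> a (fst e) (snd e) \<le> 1" using rng by (auto simp: upper_pairs_def)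
  have "{f. \<epsilon> \<le> \<bar>\<Sum>j<n. centered_adj a f r j\<bar>} =
        {f. \<epsilon> \<le> \<bar>\<Sum>e\<in>upper_pairs n. c e * (of_bool (f e) - a (fst e) (snd e))\<bar>}"
    unfolding rowK sum_centered_adj_upper_pairs[OF sym] c_def by simp
  moreover have "measure_pmf.prob (bernoulli_graph n a) {f. \<epsilon> \<le> \<bar>\<Sum>e\<in>upper_pairs n. c e * (of_bool (f e) - a (fst e) (snd e))\<bar>}
      \<le> 2 * exp (- 2 * \<epsilon>\<^sup>2 / real n)"
    unfolding bernoulli_graph_def
    by (rule hoeffding_Pi_bernoulli[where p = "\<lambda>e. a (fst e) (snd e)"]) (use pr eps cD in auto)
  ultimately show ?thesis by simp
qed

lemma prob_quadratic_form_deviation_ge: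
  fixes y :: "nat \<Rightarrow> real"
  assumes sym: "\<forall>i<n. \<forall>j<n. a i j = a j i"
    and rng: "\<forall>i<n. \<forall>j<n. 0 \<le> a i j \<and> a i j \<le> 1" and y: "sum_sq n y \<le> 1" and T: "0 < T"
  shows "measure_pmf.prob (bernoulli_graph n a) {f. T \<le> \<bar>bilinear_form n (centered_adj a f) y y\<bar>} \<le> 2 * exp (- (T\<^sup>2))"
proof -
  define K where "K = (\<lambda>i j. y i * y j)"
  define c where "c = (\<lambda>e. K (fst e) (snd e) + K (snd e) (fst e))"
  have bfK: "bilinear_form n (centered_adj a f) y y = (\<Sum>i<n. \<Sum>j<n. K i j * centered_adj a f i j)" for f
    unfolding bilinear_form_def K_def by (simp add: mult_ac)
  define F where "F = (\<lambda>i j. (y i)\<^sup>2 * (y j)\<^sup>2)"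
  have "(sum_sq n y)\<^sup>2 = (\<Sum>i<n. \<Sum>j<n. F i j)"
    unfolding sum_sq_def F_def by (simp add: power2_eq_square sum_product)
  also have "\<dots> = (\<Sum>e\<in>upper_pairs n. F (fst e) (snd e) + F (snd e) (fst e)) + (\<Sum>i<n. F i i)"
    by (rule sum_square_split_upper_pairs)
  finally have eqF: "(sum_sq n y)\<^sup>2 = (\<Sum>e\<in>upper_pairs n. F (fst e) (snd e) + F (snd e) (fst e)) + (\<Sum>i<n. F i i)" .
  have "(\<Sum>e\<in>upper_pairs n. (c e)\<^sup>2) = 2 * (\<Sum>e\<in>upper_pairs n. F (fst e) (snd e) + F (snd e) (fst e))"
    unfolding c_def K_def F_def sum_distrib_left
    by (intro sum.cong refl) (simp add: power2_eq_square algebra_simps)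
  also have "\<dots> \<le> 2 * (sum_sq n y)\<^sup>2"
    using eqF by (simp add: F_def sum_nonneg)
  also have "\<dots> \<le> 2"
  proof -
    have "(sum_sq n y)\<^sup>2 \<le> 1" using y sum_sq_nonneg[of n y] by (simp add: power_le_one)
    then show ?thesis by simp
  qed
  finally have cD: "(\<Sum>e\<in>upper_pairs n. (c e)\<^sup>2) \<le> 2" .
  have pr: "\<forall>e\<in>upper_pairs n. 0 \<le> a (fst e) (snd e) \<and> a (fst e) (snd e) \<le> 1" using rng by (auto simp: upper_pairs_def)
  have "{f. T \<le> \<bar>bilinear_form n (centered_adj a f) y y\<bar>} =
        {f. T \<le> \<bar>\<Sum>e\<in>upper_pairs n. c e * (of_bool (f e) - a (fst e) (snd e))\<bar>}"
    unfolding bfK sum_centered_adj_upper_pairs[OF sym] c_def by simp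
  moreover have "measure_pmf.prob (bernoulli_graph n a) {f. T \<le> \<bar>\<Sum>e\<in>upper_pairs n. c e * (of_bool (f e) - a (fst e) (snd e))\<bar>}
      \<le> 2 * exp (- 2 * T\<^sup>2 / 2)"
    unfolding bernoulli_graph_def
    by (rule hoeffding_Pi_bernoulli[where p = "\<lambda>e. a (fst e) (snd e)"]) (use pr T cD in auto)
  ultimately show ?thesis by simp
qed

definition concentrated :: "nat \<Rightarrow> (nat \<Rightarrow> nat \<Rightarrow> real) \<Rightarrow> real \<Rightarrow> real \<Rightarrow> (nat \<times> nat \<Rightarrow> bool) \<Rightarrow> bool" where
  "concentrated n a \<epsilon> T f \<longleftrightarrow> (\<forall>r<n. \<bar>\<Sum>j<n. centered_adj a f r j\<bar> < \<epsilon>) \<and>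
     (\<forall>y\<in>grid_net n. sum_sq n y \<le> 1 \<longrightarrow> \<bar>bilinear_form n (centered_adj a f) y y\<bar> < T)"

lemma prob_not_concentrated_le:
  assumes n: "0 < n" and sym: "\<forall>i<n. \<forall>j<n. a i j = a j i"
    and rng: "\<forall>i<n. \<forall>j<n. 0 \<le> a i j \<and> a i j \<le> 1" and eps: "0 < \<epsilon>" and T: "0 < T"
  shows "measure_pmf.prob (bernoulli_graph n a) {f. \<not> concentrated n a \<epsilon> T f}
     \<le> real n * (2 * exp (- 2 * \<epsilon>\<^sup>2 / real n)) + (9 * real n) ^ n * (2 * exp (- (T\<^sup>2)))"
proof -
  let ?P = "measure_pmf.prob (bernoulli_graph n a)"
  define R where "R = (\<lambda>r. {f. \<epsilon> \<le> \<bar>\<Sum>j<n. centered_adj a f r j\<bar>})"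
  define Y where "Y = grid_net n \<inter> {y. sum_sq n y \<le> 1}"
  define Q where "Q = (\<lambda>y. {f. T \<le> \<bar>bilinear_form n (centered_adj a f) y y\<bar>})"
  have fY: "finite Y" unfolding Y_def using grid_net_card(1)[OF n] by simp
  have "card Y \<le> card (grid_net n)" unfolding Y_def using grid_net_card(1)[OF n] by (intro card_mono) auto
  then have cY: "real (card Y) \<le> (9 * real n) ^ n"
    using grid_net_card(2)[OF n] by (meson of_nat_le_iff order_trans)
  have "{f. \<not> concentrated n a \<epsilon> T f} = (\<Union>r\<in>{..<n}. R r) \<union> (\<Union>y\<in>Y. Q y)"
    unfolding concentrated_def R_def Y_def Q_def by (auto simp: not_less)
  then have "?P {f. \<not> concentrated n a \<epsilon> T f} \<le> ?P (\<Union>r\<in>{..<n}. R r) + ?P (\<Union>y\<in>Y. Q y)"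
    by (simp add: measure_Un_le)
  also have "?P (\<Union>r\<in>{..<n}. R r) \<le> (\<Sum>r<n. ?P (R r))"
    by (rule measure_pmf.finite_measure_subadditive_finite) auto
  also have "\<dots> \<le> (\<Sum>r<n. 2 * exp (- 2 * \<epsilon>\<^sup>2 / real n))"
    unfolding R_def by (intro sum_mono prob_row_sum_deviation_ge[OF sym rng _ eps]) auto
  also have "?P (\<Union>y\<in>Y. Q y) \<le> (\<Sum>y\<in>Y. ?P (Q y))"
    by (rule measure_pmf.finite_measure_subadditive_finite) (use fY in auto)
  also have "\<dots> \<le> (\<Sum>y\<in>Y. 2 * exp (- (T\<^sup>2)))"
    unfolding Q_def Y_def by (intro sum_mono prob_quadratic_form_deviation_ge[OF sym rng _ T]) auto
  also have "\<dots> \<le> (9 * real n) ^ n * (2 * exp (- (T\<^sup>2)))" using cY by (simp add: mult_right_mono)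
  finally show ?thesis by simp
qed

lemma laplacian_quadratic_form_diff_centered:
  assumes v: "v \<in> carrier_vec n"
  shows "v \<bullet> (laplacian n (adj_of f) *\<^sub>v v) - v \<bullet> (laplacian n a *\<^sub>v v)
    = bilinear_form n (centered_adj a f) (\<lambda>i. v $ i) (\<lambda>i. v $ i) - (\<Sum>i<n. (v $ i)\<^sup>2 * (\<Sum>j<n. centered_adj a f i j))"
proof -
  have "laplacian n (\<lambda>i j. adj_of f i j - a i j) = laplacian n (centered_adj a f)"
    unfolding centered_adj_def by (rule laplacian_off_diagonal)
  then have "v \<bullet> (laplacian n (adj_of f) *\<^sub>v v) - v \<bullet> (laplacian n a *\<^sub>v v)
      = v \<bullet> (laplacian n (centered_adj a f) *\<^sub>v v)"
    using laplacian_quadratic_form_diff[OF v] by simp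
  also have "\<dots> = bilinear_form n (centered_adj a f) (\<lambda>i. v $ i) (\<lambda>i. v $ i)
      - (\<Sum>i<n. (v $ i)\<^sup>2 * (\<Sum>j<n. centered_adj a f i j))"
    unfolding laplacian_quadratic_form[OF v] bilinear_form_def
    by (simp add: sum_subtractf sum_distrib_left mult_ac)
  finally show ?thesis .
qed

lemma laplacian_perturbation_of_concentrated:
  assumes n: "0 < n" and sym: "\<forall>i<n. \<forall>j<n. a i j = a j i" and conc: "concentrated n a \<epsilon> T f"
    and v: "v \<in> carrier_vec n"
  shows "\<bar>v \<bullet> (laplacian n (adj_of f) *\<^sub>v v) - v \<bullet> (laplacian n a *\<^sub>v v)\<bar> \<le> (2 * T + \<epsilon>) * (v \<bullet> v)"
proof -
  define u where "u = (\<lambda>i. v $ i)"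
  define X where "X = centered_adj a f"
  have vv: "v \<bullet> v = sum_sq n u" unfolding sum_sq_def u_def using v by (simp add: scalar_prod_eq_sum power2_eq_square)
  have symX: "\<forall>i<n. \<forall>j<n. X i j = X j i" unfolding X_def by (rule centered_adj_commute[OF sym])
  have "\<bar>bilinear_form n X (grid_round n y) (grid_round n y)\<bar> \<le> T" if y: "sum_sq n y \<le> 1" for y
    using conc grid_round_in_grid_net[OF n y] order_trans[OF sum_sq_grid_round(1)[OF n] y]
    unfolding concentrated_def X_def by fastforce
  then have quad: "\<bar>bilinear_form n X u u\<bar> \<le> 2 * T * sum_sq n u"
    using quadratic_form_le_of_grid[OF symX n] by blast
  have "\<bar>\<Sum>i<n. (u i)\<^sup>2 * (\<Sum>j<n. X i j)\<bar> \<le> (\<Sum>i<n. (u i)\<^sup>2 * \<epsilon>)"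
  proof (rule order_trans[OF sum_abs sum_mono])
    fix i assume "i \<in> {..<n}"
    then have "\<bar>\<Sum>j<n. X i j\<bar> < \<epsilon>" using conc unfolding concentrated_def X_def by auto
    then show "\<bar>(u i)\<^sup>2 * (\<Sum>j<n. X i j)\<bar> \<le> (u i)\<^sup>2 * \<epsilon>"
      by (simp add: abs_mult mult_left_mono)
  qed
  then have rows: "\<bar>\<Sum>i<n. (u i)\<^sup>2 * (\<Sum>j<n. X i j)\<bar> \<le> \<epsilon> * sum_sq n u"
    unfolding sum_sq_def by (simp add: sum_distrib_left mult_ac)
  show ?thesis
    unfolding laplacian_quadratic_form_diff_centered[OF v] vv u_def[symmetric] X_def[symmetric]
    using quad rows by (simp add: algebra_simps)
qed

theorem laplacian_eigenvalue_concentration: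
  assumes n: "0 < n" and sym: "\<forall>i<n. \<forall>j<n. a i j = a j i"
    and rng: "\<forall>i<n. \<forall>j<n. 0 \<le> a i j \<and> a i j \<le> 1" and p: "p < n" and \<rho>: "0 < \<rho>"
  shows "1 - (2 * real n * exp (- \<rho>\<^sup>2 / (2 * real n)) + 2 * (9 * real n) ^ n * exp (- \<rho>\<^sup>2 / 16))
    \<le> measure_pmf.prob (bernoulli_graph n a)
         {f. \<bar>eigs_desc (laplacian n (adj_of f)) ! p - eigs_desc (laplacian n a) ! p\<bar> \<le> \<rho>}"
proof -
  let ?P = "measure_pmf.prob (bernoulli_graph n a)"
  have e1: "- 2 * (\<rho> / 2)\<^sup>2 / real n = - \<rho>\<^sup>2 / (2 * real n)" and e2: "(\<rho> / 4)\<^sup>2 = \<rho>\<^sup>2 / 16"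
    by (simp_all add: power_divide)
  have La: "laplacian n a \<in> carrier_mat n n" "transpose_mat (laplacian n a) = laplacian n a"
    using transpose_laplacian[OF sym] by auto
  \<comment> \<open>\<open>\<epsilon> = \<rho>/2\<close> and \<open>T = \<rho>/4\<close> make the perturbation bound \<open>(2 T + \<epsilon>) |v|\<^sup>2\<close>
    equal to \<open>\<rho> |v|\<^sup>2\<close>\<close>
  have "{f. concentrated n a (\<rho> / 2) (\<rho> / 4) f}
      \<subseteq> {f. \<bar>eigs_desc (laplacian n (adj_of f)) ! p - eigs_desc (laplacian n a) ! p\<bar> \<le> \<rho>}"
  proof safe
    fix f assume conc: "concentrated n a (\<rho> / 2) (\<rho> / 4) f"
    have "transpose_mat (laplacian n (adj_of f)) = laplacian n (adj_of f)"
      by (rule transpose_laplacian) (auto simp: adj_of_def)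
    then show "\<bar>eigs_desc (laplacian n (adj_of f)) ! p - eigs_desc (laplacian n a) ! p\<bar> \<le> \<rho>"
      using laplacian_perturbation_of_concentrated[OF n sym conc]
      by (intro eigs_desc_perturbation[OF La _ _ _ p]) auto
  qed
  then have "?P {f. concentrated n a (\<rho> / 2) (\<rho> / 4) f}
      \<le> ?P {f. \<bar>eigs_desc (laplacian n (adj_of f)) ! p - eigs_desc (laplacian n a) ! p\<bar> \<le> \<rho>}"
    by (rule measure_pmf.finite_measure_mono) simp
  moreover have "?P {f. concentrated n a (\<rho> / 2) (\<rho> / 4) f} = 1 - ?P {f. \<not> concentrated n a (\<rho> / 2) (\<rho> / 4) f}"
    using measure_pmf.prob_compl[of "{f. \<not> concentrated n a (\<rho> / 2) (\<rho> / 4) f}" "bernoulli_graph n a"]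
    by (simp add: Compl_eq_Diff_UNIV[symmetric] Collect_neg_eq[symmetric])
  moreover have "?P {f. \<not> concentrated n a (\<rho> / 2) (\<rho> / 4) f}
      \<le> 2 * real n * exp (- \<rho>\<^sup>2 / (2 * real n)) + 2 * (9 * real n) ^ n * exp (- \<rho>\<^sup>2 / 16)"
    using prob_not_concentrated_le[OF n sym rng, of "\<rho> / 2" "\<rho> / 4", unfolded e1 e2] \<rho>
    by (simp add: mult_ac)
  ultimately show ?thesis by linarith
qed

section \<open>The exponential tail constant\<close>

lemma five_power_le_exp:
  assumes n: "1 \<le> n"
  shows "5 * (9 * real n) ^ n \<le> exp (2 * real n * ln (9 * real n))"
proof -
  have "5 * (9 * real n) ^ n \<le> (9 * real n) * (9 * real n) ^ n" using n by (intro mult_right_mono) auto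
  also have "\<dots> = exp (real (Suc n) * ln (9 * real n))"
    by (subst exp_of_nat_mult) (use n in simp)
  also have "\<dots> \<le> exp (2 * real n * ln (9 * real n))"
    using n by (intro exp_mono mult_right_mono) auto
  finally show ?thesis .
qed

lemma two_ln_le_powr_for_large:
  fixes g r :: real
  assumes g: "0 < g" "g \<le> 1" and r1: "1 \<le> r" and big: "(576 / g) powr (1 / g) \<le> r"
  shows "2 * ln (9 * r) \<le> r powr (2 * g) / 32"
proof -
  define m where "m = r powr g"
  have "((576 / g) powr (1 / g)) powr g \<le> m" unfolding m_def using big g by (intro powr_mono2) auto
  then have m576: "576 / g \<le> m" using g by (simp add: powr_powr)
  have m0: "0 \<le> m" unfolding m_def by simp
  have "ln (9 * r) \<le> (9 * r) powr g / g" using r1 g by (intro ln_powr_bound) auto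
  also have "(9 * r) powr g = 9 powr g * m" unfolding m_def using r1 by (simp add: powr_mult)
  also have "9 powr g * m / g \<le> 9 * m / g"
    using g powr_mono[of g 1 9] m0 by (auto intro!: divide_right_mono mult_right_mono)
  finally have "2 * ln (9 * r) \<le> m * (576 / g) / 32" by simp
  also have "\<dots> \<le> m * m / 32" using m576 m0 by (intro divide_right_mono mult_left_mono) auto
  also have "m * m = r powr (2 * g)" unfolding m_def by (simp add: powr_add[symmetric])
  finally show ?thesis .
qed

lemma tail_bound_large_n:
  fixes g :: real
  assumes g: "0 < g" "g \<le> 1" and r8: "8 \<le> real n" and big: "(576 / g) powr (1 / g) \<le> real n"
  defines "a \<equiv> real n powr (2 * g)"
  shows "2 * real n * exp (- a / 2) + 2 * (9 * real n) ^ n * exp (- (real n * a) / 16)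
    \<le> 2 * real n * exp (- a / 4)"
proof -
  define r where "r = real n"
  define E where "E = exp (- a / 4)"
  have r1: "1 \<le> r" using r8 unfolding r_def by simp
  have a1: "1 \<le> a" unfolding a_def using r1 g by (intro ge_one_powr_ge_zero) (auto simp: r_def)
  \<comment> \<open>the \<open>(9 n)\<^sup>n\<close> points of the net are beaten by the factor \<open>exp (- n a / 16)\<close>\<close>
  have "2 * r * ln (9 * r) \<le> r * a / 32"
    using mult_left_mono[OF two_ln_le_powr_for_large[OF g r1 big[folded r_def]], of r] r1
    unfolding a_def r_def by simp
  moreover have "a / 4 \<le> r * a / 32" using r8 a1 unfolding r_def by simp
  ultimately have key: "2 * r * ln (9 * r) - r * a / 16 \<le> - a / 4" by simp
  have "5 * ((9 * r) ^ n * exp (- (r * a) / 16)) \<le> exp (2 * r * ln (9 * r)) * exp (- (r * a) / 16)"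
    using mult_right_mono[OF five_power_le_exp[of n], of "exp (- (r * a) / 16)"] r1
    unfolding r_def by (simp add: mult.assoc)
  also have "\<dots> = exp (2 * r * ln (9 * r) - r * a / 16)" by (simp add: exp_add[symmetric])
  also have "\<dots> \<le> E" unfolding E_def using key by simp
  finally have "(9 * r) ^ n * exp (- (r * a) / 16) \<le> E / 5" by simp
  moreover have "E / 5 \<le> r * (E / 5)" using r1 unfolding E_def by simp
  ultimately have net: "(9 * r) ^ n * exp (- (r * a) / 16) \<le> r * (E / 5)" by linarith
  have "E \<le> exp (-1/4)" unfolding E_def using a1 by simp
  also have "exp (-1/4::real) \<le> 4/5"
    using exp_ge_add_one_self[of "1/4::real"] by (simp add: exp_minus field_simps)
  finally have E45: "E \<le> 4/5" .
  have "exp (- a / 2) = E * E" unfolding E_def by (simp add: exp_add[symmetric])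
  also have "\<dots> \<le> E * (4/5)" using E45 unfolding E_def by (simp add: mult_left_mono)
  finally have "r * exp (- a / 2) \<le> r * (E * (4/5))" using r1 by simp
  with net show ?thesis unfolding r_def E_def by (simp add: algebra_simps)
qed

lemma exists_exponential_tail_constant:
  fixes g :: real
  assumes g: "0 < g" "g \<le> 1/2"
  shows "\<exists>C>0. \<forall>n::nat. 2 \<le> n \<longrightarrow>
    min 1 (2 * real n * exp (- (real n powr (2 * g)) / 2)
           + 2 * (9 * real n) ^ n * exp (- (real n * real n powr (2 * g)) / 16))
    \<le> 2 * real n * exp (- C * real n powr (2 * g))"
proof -
  define N0 where "N0 = max 8 ((576 / g) powr (1 / g))"
  define C where "C = min (1/4) (1 / (2 * N0))"
  have N0: "8 \<le> N0" unfolding N0_def by simp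
  have C: "0 < C" "C \<le> 1/4" "C \<le> 1 / (2 * N0)" unfolding C_def using N0 by auto
  have "min 1 (2 * real n * exp (- (real n powr (2 * g)) / 2)
           + 2 * (9 * real n) ^ n * exp (- (real n * real n powr (2 * g)) / 16))
    \<le> 2 * real n * exp (- C * real n powr (2 * g))" if n2: "2 \<le> n" for n
  proof (cases "real n < N0")
    case True
    \<comment> \<open>for small \<open>n\<close> the right-hand side exceeds \<open>1\<close>\<close>
    have "real n powr (2 * g) \<le> real n powr 1" using n2 g by (intro powr_mono) auto
    then have "C * real n powr (2 * g) \<le> 1 / (2 * N0) * real n"
      using C n2 N0 by (intro mult_mono) auto
    also have "\<dots> < 1/2" using True N0 by (simp add: field_simps)
    finally have "exp (- 1/2) \<le> exp (- C * real n powr (2 * g))" by simp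
    moreover have "1/2 \<le> exp (- 1/2 :: real)" using exp_ge_add_one_self[of "-1/2::real"] by simp
    ultimately have "1/2 \<le> exp (- C * real n powr (2 * g))" by linarith
    then have "1 \<le> 2 * real n * exp (- C * real n powr (2 * g))"
      using n2 mult_mono[of 2 "2 * real n" "1/2" "exp (- C * real n powr (2 * g))"] by simp
    then show ?thesis by linarith
  next
    case False
    then have "8 \<le> real n" "(576 / g) powr (1 / g) \<le> real n" unfolding N0_def by auto
    note large = tail_bound_large_n[OF g(1) _ this] g(2)
    have "exp (- (real n powr (2 * g)) / 4) \<le> exp (- C * real n powr (2 * g))"
      using mult_right_mono[OF C(2), of "real n powr (2 * g)"] by simp
    then have "2 * real n * exp (- (real n powr (2 * g)) / 4) \<le> 2 * real n * exp (- C * real n powr (2 * g))"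
      by (simp add: mult_left_mono)
    then show ?thesis using large by linarith
  qed
  then show ?thesis using C(1) by blast
qed

section \<open>Eigenvalues of the sampled graph\<close>

lemma edge_pmf_eq_bernoulli_graph:
  "edge_pmf M Ups h w n x = bernoulli_graph n (\<lambda>i j. graphon M Ups h w (x i) (x j))"
  unfolding edge_pmf_def bernoulli_graph_def upper_pairs_def
  by (rule arg_cong[where f = "Pi_pmf _ False"]) (auto simp: case_prod_beta)

lemma sampled_laplacian_eigenvalue_deviation:
  assumes setting: "ultrametric_setting M Ups h w" and sample: "valid_sample M Ups n x"
    and n: "0 < n" and p: "p < n" and ev: "eigs_desc (L_det M Ups h w n x) ! p = lam M Ups h w n I"
    and \<rho>: "0 < \<rho>"
  shows "1 - (2 * real n * exp (- \<rho>\<^sup>2 / (2 * real n)) + 2 * (9 * real n) ^ n * exp (- \<rho>\<^sup>2 / 16))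
    \<le> measure_pmf.prob (edge_pmf M Ups h w n x)
        {f. \<bar>\<bar>eigs_desc (L_rand n f) ! p\<bar> / real n
             - (\<Sum>J\<in>chain_above M Ups I. measure lborel J * (w (h J) - w_parent M Ups h w J))\<bar>
            \<le> \<rho> / real n}"
proof -
  define a where "a = (\<lambda>i j. graphon M Ups h w (x i) (x j))"
  define S where "S = (\<Sum>J\<in>chain_above M Ups I. measure lborel J * (w (h J) - w_parent M Ups h w J))"
  have sym: "\<forall>i<n. \<forall>j<n. a i j = a j i" unfolding a_def by (simp add: graphon_commute)
  have "x i \<in> {0..1}" if "i < n" for i using sample that unfolding valid_sample_def by auto
  then have rng: "\<forall>i<n. \<forall>j<n. 0 \<le> a i j \<and> a i j \<le> 1"
    unfolding a_def using graphon_bounds[OF setting] by blast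
  have lam: "eigs_desc (laplacian n a) ! p = - (real n * S)"
    using ev unfolding L_det_def lam_def S_def a_def[symmetric] by (simp add: sum_distrib_left mult.assoc)
  have "{f. \<bar>eigs_desc (laplacian n (adj_of f)) ! p - eigs_desc (laplacian n a) ! p\<bar> \<le> \<rho>}
     \<subseteq> {f. \<bar>\<bar>eigs_desc (L_rand n f) ! p\<bar> / real n - S\<bar> \<le> \<rho> / real n}"
  proof safe
    fix f assume close: "\<bar>eigs_desc (laplacian n (adj_of f)) ! p - eigs_desc (laplacian n a) ! p\<bar> \<le> \<rho>"
    have adj: "\<forall>i<n. \<forall>j<n. adj_of f i j = adj_of f j i" "\<forall>i<n. \<forall>j<n. 0 \<le> adj_of f i j"
      by (auto simp: adj_of_def)
    have "eigs_desc (laplacian n (adj_of f)) ! p \<le> 0"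
      using laplacian_quadratic_form_nonpos[OF adj] transpose_laplacian[OF adj(1)]
      by (intro eigs_desc_nonpos[OF _ _ _ p]) auto
    then have "\<bar>\<bar>eigs_desc (L_rand n f) ! p\<bar> / real n - S\<bar>
        = \<bar>eigs_desc (laplacian n (adj_of f)) ! p - eigs_desc (laplacian n a) ! p\<bar> / real n"
      using n unfolding L_rand_def lam by (simp add: field_simps abs_divide)
    also have "\<dots> \<le> \<rho> / real n" using close by (simp add: divide_right_mono)
    finally show "\<bar>\<bar>eigs_desc (L_rand n f) ! p\<bar> / real n - S\<bar> \<le> \<rho> / real n" .
  qed
  then have "measure_pmf.prob (bernoulli_graph n a)
      {f. \<bar>eigs_desc (laplacian n (adj_of f)) ! p - eigs_desc (laplacian n a) ! p\<bar> \<le> \<rho>}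
    \<le> measure_pmf.prob (edge_pmf M Ups h w n x) {f. \<bar>\<bar>eigs_desc (L_rand n f) ! p\<bar> / real n - S\<bar> \<le> \<rho> / real n}"
    unfolding edge_pmf_eq_bernoulli_graph a_def[symmetric] by (rule measure_pmf.finite_measure_mono) simp
  then show ?thesis
    using laplacian_eigenvalue_concentration[OF n sym rng p \<rho>] unfolding S_def by linarith
qed

lemma sampled_laplacian_eigenvalue_deviation_powr:
  assumes setting: "ultrametric_setting M Ups h w" and sample: "valid_sample M Ups n x"
    and n: "0 < n" and p: "p < n" and ev: "eigs_desc (L_det M Ups h w n x) ! p = lam M Ups h w n I"
  shows "1 - min 1 (2 * real n * exp (- (real n powr (2 * \<gamma>)) / 2)
                   + 2 * (9 * real n) ^ n * exp (- (real n * real n powr (2 * \<gamma>)) / 16))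
    \<le> measure_pmf.prob (edge_pmf M Ups h w n x)
        {f. \<bar>\<bar>eigs_desc (L_rand n f) ! p\<bar> / real n
             - (\<Sum>J\<in>chain_above M Ups I. measure lborel J * (w (h J) - w_parent M Ups h w J))\<bar>
            \<le> real n powr (\<gamma> - 1/2)}"
proof -
  define \<rho> where "\<rho> = real n powr (1/2 + \<gamma>)"
  have \<rho>: "0 < \<rho>" unfolding \<rho>_def using n by simp
  have "\<rho>\<^sup>2 = real n * real n powr (2 * \<gamma>)"
    unfolding \<rho>_def using n by (simp add: powr_add[symmetric] power2_eq_square) (simp add: powr_add)
  then have e1: "- \<rho>\<^sup>2 / (2 * real n) = - (real n powr (2 * \<gamma>)) / 2"
    and e2: "- \<rho>\<^sup>2 / 16 = - (real n * real n powr (2 * \<gamma>)) / 16"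
    using n by simp_all
  have "real n powr (\<gamma> - 1/2) = real n powr ((1/2 + \<gamma>) - 1)" by simp
  then have e3: "\<rho> / real n = real n powr (\<gamma> - 1/2)"
    unfolding \<rho>_def powr_diff using n by simp
  show ?thesis
    using sampled_laplacian_eigenvalue_deviation[OF setting sample n p ev \<rho>, unfolded e1 e2 e3]
      measure_nonneg[of "measure_pmf (edge_pmf M Ups h w n x)"]
    by (auto simp: min_def)
qed

theorem corollary6p4:
  fixes M :: nat and Ups :: "nat \<Rightarrow> real set set"
    and h :: "real set \<Rightarrow> real" and w :: "real \<Rightarrow> real" and \<gamma> :: real
  assumes setting: "ultrametric_setting M Ups h w"
    and gam: "0 < \<gamma>" "\<gamma> < 1/2"
  shows "\<exists>C>0. \<forall>k::nat. \<forall>x :: nat \<Rightarrow> real. \<forall>i::nat. \<forall>I.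
    (let Nk = k * base_N M Ups in
      Nk \<ge> 2 \<longrightarrow> valid_sample M Ups Nk x \<longrightarrow> 2 \<le> i \<longrightarrow> i \<le> Nk \<longrightarrow>
      I \<in> family M Ups \<longrightarrow>
      eigs_desc (L_det M Ups h w Nk x) ! (i - 1) = lam M Ups h w Nk I \<longrightarrow>
      measure_pmf.prob (edge_pmf M Ups h w Nk x)
        {f. \<bar>\<bar>eigs_desc (L_rand Nk f) ! (i - 1)\<bar> / real Nk
             - (\<Sum>J\<in>chain_above M Ups I.
                  measure lborel J * (w (h J) - w_parent M Ups h w J))\<bar>
            \<le> real Nk powr (\<gamma> - 1/2)}
      \<ge> 1 - 2 * real Nk * exp (- C * real Nk powr (2 * \<gamma>)))"
proof -
  obtain C where C: "0 < C" and tail: "\<And>n::nat. 2 \<le> n \<Longrightarrow>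
      min 1 (2 * real n * exp (- (real n powr (2 * \<gamma>)) / 2)
             + 2 * (9 * real n) ^ n * exp (- (real n * real n powr (2 * \<gamma>)) / 16))
      \<le> 2 * real n * exp (- C * real n powr (2 * \<gamma>))"
    using exists_exponential_tail_constant[of \<gamma>] gam by auto
  have "1 - 2 * real n * exp (- C * real n powr (2 * \<gamma>))
      \<le> measure_pmf.prob (edge_pmf M Ups h w n x)
          {f. \<bar>\<bar>eigs_desc (L_rand n f) ! (i - 1)\<bar> / real n
               - (\<Sum>J\<in>chain_above M Ups I. measure lborel J * (w (h J) - w_parent M Ups h w J))\<bar>
              \<le> real n powr (\<gamma> - 1/2)}"
    if n: "2 \<le> n" and sample: "valid_sample M Ups n x" and i: "2 \<le> i" "i \<le> n"
      and ev: "eigs_desc (L_det M Ups h w n x) ! (i - 1) = lam M Ups h w n I" for n x i I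
    using sampled_laplacian_eigenvalue_deviation_powr[OF setting sample _ _ ev, of \<gamma>] tail[OF n] n i
    by fastforce
  then show ?thesis using C unfolding Let_def by blast
qed

end
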